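(* Let $t\ge 2$ and let $\mathcal{G}_t^{gr}$ be the finite dimensional Grassmann algebra $\mathcal{G}_t=\langle 1,e_1,\dots,e_t\mid e_ie_j=-e_je_i\rangle$ with the grading in which the even part is spanned by the monomials in the $e_i$ of even length and the odd part by those of odd length. Then $$C^{gr}(\mathcal{G}_t^{gr})=\langle y_1,\ z_1z_2\cdots z_t,\ \mathrm{Id}^{gr}(\mathcal{G}_t^{gr})\rangle^{T_2}.$$
   Context: $F$ is a field of characteristic zero. A superalgebra is an algebra $A=A_0\oplus A_1$ with $A_iA_j\subseteq A_{i+j\bmod 2}$; $Z(A)$ is the center. $F\langle Y,Z\rangle$ is the free algebra on even variables $y_1,y_2,\dots$ and odd variables $z_1,z_2,\dots$. $\mathrm{Id}^{gr}(A)$ is the set of graded identities (polynomials vanishing under all substitutions of even variables by elements of $A_0$ and odd variables by elements of $A_1$); $C^{gr}(A)$ is the set of central graded polynomials (zero constant term and all such evaluations in $Z(A)$). For $f_1,\dots,f_k\in F\langle Y,Z\rangle$ and a $T_2$-ideal $I$ (ideal invariant under grading-preserving endomorphisms), $\langle f_1,\dots,f_k,I\rangle^{T_2}$ is the $T_2$-space generated by $\{f_1,\dots,f_k\}\cup I$, i.e. the linear span of all polynomials obtained from elements of this set by substituting even variables by even elements and odd variables by odd elements of $F\langle Y,Z\rangle$. *)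

theory Defs
  imports Main
begin

datatype var = Y nat | Z nat

definition is_odd_var :: "var \<Rightarrow> bool" where
  "is_odd_var v = (case v of Y _ \<Rightarrow> False | Z _ \<Rightarrow> True)"

text \<open>A noncommutative polynomial is a finitely supported coefficient function on words.
  The free algebra is non-unital: the empty word has coefficient 0.\<close>
definition FA :: "(var list \<Rightarrow> 'a::field) set" where
  "FA = {f. finite {w. f w \<noteq> 0} \<and> f [] = 0}"

definition mono :: "var list \<Rightarrow> (var list \<Rightarrow> 'a::field)" where
  "mono w = (\<lambda>u. if u = w then 1 else 0)"

definition pmul :: "(var list \<Rightarrow> 'a::field) \<Rightarrow> (var list \<Rightarrow> 'a) \<Rightarrow> (var list \<Rightarrow> 'a)" where
  "pmul f g = (\<lambda>w. \<Sum>i\<le>length w. f (take i w) * g (drop i w))"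

fun pprod :: "(var list \<Rightarrow> 'a::field) list \<Rightarrow> (var list \<Rightarrow> 'a)" where
  "pprod [] = mono []"
| "pprod (p # ps) = pmul p (pprod ps)"

definition even_poly :: "(var list \<Rightarrow> 'a::field) \<Rightarrow> bool" where
  "even_poly p = (\<forall>w. p w \<noteq> 0 \<longrightarrow> even (length (filter is_odd_var w)))"

definition odd_poly :: "(var list \<Rightarrow> 'a::field) \<Rightarrow> bool" where
  "odd_poly p = (\<forall>w. p w \<noteq> 0 \<longrightarrow> odd (length (filter is_odd_var w)))"

definition graded_subst :: "(var \<Rightarrow> (var list \<Rightarrow> 'a::field)) \<Rightarrow> bool" where
  "graded_subst \<sigma> = ((\<forall>i. \<sigma> (Y i) \<in> FA \<and> even_poly (\<sigma> (Y i))) \<and>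
                      (\<forall>i. \<sigma> (Z i) \<in> FA \<and> odd_poly (\<sigma> (Z i))))"

definition subst :: "(var list \<Rightarrow> 'a::field) \<Rightarrow> (var \<Rightarrow> (var list \<Rightarrow> 'a)) \<Rightarrow> (var list \<Rightarrow> 'a)" where
  "subst f \<sigma> = (\<lambda>u. \<Sum>w\<in>{w. f w \<noteq> 0}. f w * pprod (map \<sigma> w) u)"

inductive_set T2span :: "(var list \<Rightarrow> 'a::field) set \<Rightarrow> (var list \<Rightarrow> 'a) set"
  for S :: "(var list \<Rightarrow> 'a) set" where
  zero: "(\<lambda>_. 0) \<in> T2span S"
| step: "g \<in> S \<Longrightarrow> graded_subst \<sigma> \<Longrightarrow> h \<in> T2span S \<Longrightarrow>
          (\<lambda>u. c * subst g \<sigma> u + h u) \<in> T2span S"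

text \<open>An element is a coefficient function on subsets S of {1..t}; S stands for the
  monomial e_{s_1} ... e_{s_k} with s_1 < ... < s_k.\<close>
definition Gcar :: "nat \<Rightarrow> (nat set \<Rightarrow> 'a::field) set" where
  "Gcar t = {g. \<forall>S. g S \<noteq> 0 \<longrightarrow> S \<subseteq> {1..t}}"

definition Geven :: "nat \<Rightarrow> (nat set \<Rightarrow> 'a::field) set" where
  "Geven t = {g \<in> Gcar t. \<forall>S. g S \<noteq> 0 \<longrightarrow> even (card S)}"

definition Godd :: "nat \<Rightarrow> (nat set \<Rightarrow> 'a::field) set" where
  "Godd t = {g \<in> Gcar t. \<forall>S. g S \<noteq> 0 \<longrightarrow> odd (card S)}"

text \<open>e_S e_T = (-1)^(number of pairs i in S, j in T with j < i) e_(S \<union> T) for disjoint S, T.\<close>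
definition gsign :: "nat set \<Rightarrow> nat set \<Rightarrow> 'a::field" where
  "gsign S T = (-1) ^ card {(i, j). i \<in> S \<and> j \<in> T \<and> j < i}"

definition gmul :: "(nat set \<Rightarrow> 'a::field) \<Rightarrow> (nat set \<Rightarrow> 'a) \<Rightarrow> (nat set \<Rightarrow> 'a)" where
  "gmul g h = (\<lambda>U. \<Sum>S\<in>Pow U. gsign S (U - S) * g S * h (U - S))"

definition gone :: "nat set \<Rightarrow> 'a::field" where
  "gone = (\<lambda>S. if S = {} then 1 else 0)"

fun gprod :: "(nat set \<Rightarrow> 'a::field) list \<Rightarrow> (nat set \<Rightarrow> 'a)" where
  "gprod [] = gone"
| "gprod (x # xs) = gmul x (gprod xs)"

definition Gcenter :: "nat \<Rightarrow> (nat set \<Rightarrow> 'a::field) set" where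
  "Gcenter t = {c \<in> Gcar t. \<forall>g\<in>Gcar t. gmul c g = gmul g c}"

definition evalG :: "(var list \<Rightarrow> 'a::field) \<Rightarrow> (var \<Rightarrow> (nat set \<Rightarrow> 'a)) \<Rightarrow> (nat set \<Rightarrow> 'a)" where
  "evalG f \<phi> = (\<lambda>U. \<Sum>w\<in>{w. f w \<noteq> 0}. f w * gprod (map \<phi> w) U)"

definition adm :: "nat \<Rightarrow> (var \<Rightarrow> (nat set \<Rightarrow> 'a::field)) \<Rightarrow> bool" where
  "adm t \<phi> = ((\<forall>i. \<phi> (Y i) \<in> Geven t) \<and> (\<forall>i. \<phi> (Z i) \<in> Godd t))"

definition Idgr :: "nat \<Rightarrow> (var list \<Rightarrow> 'a::field) set" where
  "Idgr t = {f \<in> FA. \<forall>\<phi>. adm t \<phi> \<longrightarrow> evalG f \<phi> = (\<lambda>_. 0)}"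

definition Cgr :: "nat \<Rightarrow> (var list \<Rightarrow> 'a::field) set" where
  "Cgr t = {f \<in> FA. f [] = 0 \<and> (\<forall>\<phi>. adm t \<phi> \<longrightarrow> evalG f \<phi> \<in> Gcenter t)}"

end

theory Submission
  imports Defs "HOL-Computational_Algebra.Polynomial"
begin

text \<open>
  Even elements of \<open>G\<^sub>t\<close> are central, a product of \<open>t\<close> odd elements is a multiple of
  \<open>e\<^sub>1 \<cdots> e\<^sub>t\<close> and hence central, and identities vanish; so the \<open>T\<^sub>2\<close>-space on the right
  consists of central polynomials.

  Conversely, split a central polynomial by the parity of the number of odd variables in its
  monomials. The even part is a substitution instance of \<open>y\<^sub>1\<close>, and the odd part is again
  central. An odd central element of \<open>G\<^sub>t\<close> has no component on a proper odd basis monomial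
  (commute it with a missing generator); for even \<open>t\<close> this already makes the odd part an
  identity. For odd \<open>t\<close>, monomials with at least \<open>t\<close> odd variables are instances of
  \<open>z\<^sub>1 \<cdots> z\<^sub>t\<close> (cut the word into \<open>t\<close> pieces with an odd number of odd variables each),
  and the rest, with fewer than \<open>t\<close> odd variables, is an identity: after normal ordering,
  substitute the scalars \<open>\<lambda>\<^bsup>D\<^sup>i\<^esup>\<close> for \<open>y\<^sub>i\<close> and distinct generators for the odd
  variables of a fixed normal monomial; the coefficient of the resulting proper odd basis
  monomial is a polynomial in \<open>\<lambda>\<close> that must vanish, and by Kronecker substitution its
  coefficients are exactly the normal-form coefficients.
\<close>

section \<open>Multiplication in the Grassmann algebra\<close>

lemma sum_eq_single:
  assumes "finite A" "\<And>y. y \<in> A \<Longrightarrow> y \<noteq> x \<Longrightarrow> f y = 0"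
  shows "sum f A = (if x \<in> A then f x else 0)"
  using assms by (cases "x \<in> A") (auto simp: sum.remove intro: sum.neutral)

definition inversions :: "nat set \<Rightarrow> nat set \<Rightarrow> nat" where
  "inversions S T = card {(i, j). i \<in> S \<and> j \<in> T \<and> j < i}"

lemma gsign_eq_power_inversions: "gsign S T = (-1) ^ inversions S T"
  by (simp add: gsign_def inversions_def)

lemma finite_inversion_pairs:
  "finite S \<Longrightarrow> finite T \<Longrightarrow> finite {(i, j). i \<in> S \<and> j \<in> T \<and> j < i}"
  by (rule finite_subset[of _ "S \<times> T"]) auto

lemma inversions_Un_left:
  assumes "finite A" "finite B" "finite C" "A \<inter> B = {}"
  shows "inversions (A \<union> B) C = inversions A C + inversions B C"
proof -
  have "{(i, j). i \<in> A \<union> B \<and> j \<in> C \<and> j < i} =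
        {(i, j). i \<in> A \<and> j \<in> C \<and> j < i} \<union> {(i, j). i \<in> B \<and> j \<in> C \<and> j < i}" by auto
  moreover have "{(i, j). i \<in> A \<and> j \<in> C \<and> j < i} \<inter> {(i, j). i \<in> B \<and> j \<in> C \<and> j < i} = {}"
    using assms(4) by auto
  ultimately show ?thesis
    unfolding inversions_def by (simp add: card_Un_disjoint finite_inversion_pairs assms)
qed

lemma inversions_Un_right:
  assumes "finite A" "finite B" "finite C" "B \<inter> C = {}"
  shows "inversions A (B \<union> C) = inversions A B + inversions A C"
proof -
  have "{(i, j). i \<in> A \<and> j \<in> B \<union> C \<and> j < i} =
        {(i, j). i \<in> A \<and> j \<in> B \<and> j < i} \<union> {(i, j). i \<in> A \<and> j \<in> C \<and> j < i}" by auto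
  moreover have "{(i, j). i \<in> A \<and> j \<in> B \<and> j < i} \<inter> {(i, j). i \<in> A \<and> j \<in> C \<and> j < i} = {}"
    using assms(4) by auto
  ultimately show ?thesis
    unfolding inversions_def by (simp add: card_Un_disjoint finite_inversion_pairs assms)
qed

lemma inversions_swap:
  assumes "finite S" "finite T" "S \<inter> T = {}"
  shows "inversions S T + inversions T S = card S * card T"
proof -
  let ?Lt = "{(i, j). i \<in> S \<and> j \<in> T \<and> i < j}"
  have split: "S \<times> T = {(i, j). i \<in> S \<and> j \<in> T \<and> j < i} \<union> ?Lt"
    using assms(3) by (auto simp: linorder_neq_iff)
  have "card ?Lt = inversions T S"
    unfolding inversions_def
    by (rule bij_betw_same_card[of "\<lambda>(i, j). (j, i)"]) (auto simp: bij_betw_def inj_on_def image_def)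
  moreover have "finite ?Lt"
    by (rule finite_subset[of _ "S \<times> T"]) (auto simp: assms)
  ultimately have "card (S \<times> T) = inversions S T + inversions T S"
    unfolding split inversions_def
    by (subst card_Un_disjoint) (auto simp: finite_inversion_pairs assms)
  then show ?thesis by (simp add: card_cartesian_product)
qed

lemma gsign_mult_self [simp]: "(gsign S T :: 'a::field) * gsign S T = 1"
  by (simp add: gsign_def flip: power_add)

lemma gsign_swap:
  assumes "finite S" "finite T" "S \<inter> T = {}"
  shows "(gsign S T :: 'a::field) * gsign T S = (-1) ^ (card S * card T)"
  using inversions_swap[OF assms] by (simp add: gsign_eq_power_inversions flip: power_add)

lemma gsign_Un_assoc:
  assumes "finite A" "finite B" "finite C" "A \<inter> B = {}" "A \<inter> C = {}" "B \<inter> C = {}"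
  shows "(gsign (A \<union> B) C :: 'a::field) * gsign A B = gsign A (B \<union> C) * gsign B C"
  using assms
  by (simp add: gsign_eq_power_inversions inversions_Un_left inversions_Un_right ac_simps
           flip: power_add)

lemma gsign_empty_left [simp]: "gsign {} T = 1"
  and gsign_empty_right [simp]: "gsign S {} = 1"
  by (simp_all add: gsign_def)

definition gfinite :: "(nat set \<Rightarrow> 'a::field) \<Rightarrow> bool" where
  "gfinite g = (\<forall>U. g U \<noteq> 0 \<longrightarrow> finite U)"

lemma gmul_infinite: "infinite U \<Longrightarrow> gmul g h U = 0"
  by (simp add: gmul_def)

lemma gfinite_gmul [simp]: "gfinite (gmul g h)"
  unfolding gfinite_def using gmul_infinite by blast

lemma gfinite_gone [simp]: "gfinite gone"
  by (simp add: gfinite_def gone_def)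

lemma gfinite_gprod [simp]: "gfinite (gprod xs)"
  by (cases xs) auto

lemma Gcar_imp_gfinite: "g \<in> Gcar t \<Longrightarrow> gfinite g"
  unfolding Gcar_def gfinite_def using finite_subset by blast

lemma gmul_gone_left:
  assumes "gfinite g" shows "gmul gone g = g"
proof
  fix U
  show "gmul gone g U = g U"
  proof (cases "finite U")
    case True
    then have "gmul gone g U = (if {} \<in> Pow U then gsign {} (U - {}) * gone {} * g (U - {}) else 0)"
      unfolding gmul_def by (intro sum_eq_single) (auto simp: gone_def)
    then show ?thesis by (simp add: gone_def)
  qed (use assms in \<open>auto simp: gmul_infinite gfinite_def\<close>)
qed

lemma gmul_gone_right:
  assumes "gfinite g" shows "gmul g gone = g"
proof
  fix U
  show "gmul g gone U = g U"
  proof (cases "finite U")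
    case True
    then have "gmul g gone U = (if U \<in> Pow U then gsign U (U - U) * g U * gone (U - U) else 0)"
      unfolding gmul_def by (intro sum_eq_single) (auto simp: gone_def)
    then show ?thesis by (simp add: gone_def)
  qed (use assms in \<open>auto simp: gmul_infinite gfinite_def\<close>)
qed

text \<open>Both sides of the associativity law are sums over the ordered partitions
  \<open>U = A \<union> B \<union> C\<close>; \<open>gsign_Un_assoc\<close> matches the signs.\<close>
lemma gmul_gmul_left_eq_partition_sum:
  assumes "finite U"
  shows "gmul (gmul g h) k U =
    (\<Sum>(A, B)\<in>Sigma (Pow U) (\<lambda>A. Pow (U - A)).
       gsign A (U - A) * g A * (gsign B (U - A - B) * h B * k (U - A - B)))"
proof -
  have fin: "finite X" if "X \<subseteq> U" for X
    using assms finite_subset that by blast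
  have "gmul (gmul g h) k U =
    (\<Sum>S\<in>Pow U. \<Sum>A\<in>Pow S. gsign S (U - S) * (gsign A (S - A) * g A * h (S - A)) * k (U - S))"
    unfolding gmul_def by (simp add: sum_distrib_left sum_distrib_right)
  also have "\<dots> = (\<Sum>(S, A)\<in>Sigma (Pow U) Pow.
      gsign S (U - S) * (gsign A (S - A) * g A * h (S - A)) * k (U - S))"
    by (rule sum.Sigma) (auto simp: assms intro: finite_subset)
  also have "\<dots> = (\<Sum>(A, B)\<in>Sigma (Pow U) (\<lambda>A. Pow (U - A)).
      gsign A (U - A) * g A * (gsign B (U - A - B) * h B * k (U - A - B)))"
  proof (rule sum.reindex_bij_witness[where i = "\<lambda>(A, B). (A \<union> B, A)" and j = "\<lambda>(S, A). (A, S - A)"])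
    fix a assume "a \<in> Sigma (Pow U) Pow"
    then obtain S A where sa: "a = (S, A)" "S \<subseteq> U" "A \<subseteq> S" by auto
    have "(gsign (A \<union> (S - A)) (U - S) :: 'a) * gsign A (S - A) =
        gsign A ((S - A) \<union> (U - S)) * gsign (S - A) (U - S)"
      by (rule gsign_Un_assoc) (use sa fin in auto)
    moreover have "A \<union> (S - A) = S" "U - A = (S - A) \<union> (U - S)" "U - A - (S - A) = U - S"
      using sa by auto
    ultimately show "(case case a of (S, A) \<Rightarrow> (A, S - A) of (A, B) \<Rightarrow>
          gsign A (U - A) * g A * (gsign B (U - A - B) * h B * k (U - A - B))) =
        (case a of (S, A) \<Rightarrow> gsign S (U - S) * (gsign A (S - A) * g A * h (S - A)) * k (U - S))"
      using sa by (simp add: ac_simps)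
  qed auto
  finally show ?thesis .
qed

lemma gmul_assoc: "gmul (gmul g h) k = gmul g (gmul h k)"
proof
  fix U
  show "gmul (gmul g h) k U = gmul g (gmul h k) U"
  proof (cases "finite U")
    case True
    then have "gmul g (gmul h k) U = (\<Sum>A\<in>Pow U. \<Sum>B\<in>Pow (U - A).
        gsign A (U - A) * g A * (gsign B (U - A - B) * h B * k (U - A - B)))"
      unfolding gmul_def by (simp add: sum_distrib_left)
    also have "\<dots> = gmul (gmul g h) k U"
      using True by (simp add: gmul_gmul_left_eq_partition_sum sum.Sigma)
    finally show ?thesis ..
  qed (simp add: gmul_infinite)
qed

lemma gmul_sum_left:
  "finite I \<Longrightarrow> gmul (\<lambda>U. \<Sum>i\<in>I. c i * f i U) g = (\<lambda>U. \<Sum>i\<in>I. c i * gmul (f i) g U)"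
  unfolding gmul_def by (auto simp: sum_distrib_left sum_distrib_right ac_simps intro: sum.swap)

lemma gmul_sum_right:
  "finite I \<Longrightarrow> gmul g (\<lambda>U. \<Sum>i\<in>I. c i * f i U) = (\<lambda>U. \<Sum>i\<in>I. c i * gmul g (f i) U)"
  unfolding gmul_def by (auto simp: sum_distrib_left sum_distrib_right ac_simps intro: sum.swap)

lemma gmul_lincomb_left: "gmul (\<lambda>U. c * f U + h U) g = (\<lambda>U. c * gmul f g U + gmul h g U)"
  unfolding gmul_def by (auto simp: sum_distrib_left sum.distrib algebra_simps)

lemma gmul_lincomb_right: "gmul g (\<lambda>U. c * f U + h U) = (\<lambda>U. c * gmul g f U + gmul g h U)"
  unfolding gmul_def by (auto simp: sum_distrib_left sum.distrib algebra_simps)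

lemma gmul_scale_left: "gmul (\<lambda>U. c * f U) g = (\<lambda>U. c * gmul f g U)"
  unfolding gmul_def by (auto simp: sum_distrib_left algebra_simps)

lemma gmul_scale_right: "gmul g (\<lambda>U. c * f U) = (\<lambda>U. c * gmul g f U)"
  unfolding gmul_def by (auto simp: sum_distrib_left algebra_simps)

lemma gmul_nonzeroD:
  assumes "gmul g h U \<noteq> 0"
  shows "finite U \<and> (\<exists>S\<subseteq>U. g S \<noteq> 0 \<and> h (U - S) \<noteq> 0)"
proof -
  obtain S where "S \<in> Pow U" "gsign S (U - S) * g S * h (U - S) \<noteq> 0"
    using assms unfolding gmul_def by (meson sum.not_neutral_contains_not_neutral)
  with assms gmul_infinite show ?thesis by auto
qed

lemma Gcar_gmul:
  assumes "g \<in> Gcar t" "h \<in> Gcar t"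
  shows "gmul g h \<in> Gcar t"
  unfolding Gcar_def
proof (intro CollectI allI impI)
  fix S assume "gmul g h S \<noteq> 0"
  then obtain A where "A \<subseteq> S" "g A \<noteq> 0" "h (S - A) \<noteq> 0"
    using gmul_nonzeroD by blast
  with assms show "S \<subseteq> {1..t}" unfolding Gcar_def by blast
qed

lemma gmul_zero [simp]: "gmul (\<lambda>_. 0) g = (\<lambda>_. 0)" "gmul g (\<lambda>_. 0) = (\<lambda>_. 0)"
  by (simp_all add: gmul_def)

lemma Gcar_gone: "gone \<in> Gcar t"
  by (simp add: Gcar_def gone_def)

section \<open>Parity, supercommutativity and the centre\<close>

definition homogeneous :: "bool \<Rightarrow> (nat set \<Rightarrow> 'a::field) \<Rightarrow> bool" where
  "homogeneous p g = (\<forall>S. g S \<noteq> 0 \<longrightarrow> (even (card S) \<longleftrightarrow> p))"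

lemma homogeneous_gmul:
  assumes "homogeneous p g" "homogeneous q h"
  shows "homogeneous (p = q) (gmul g h)"
  unfolding homogeneous_def
proof (intro allI impI)
  fix U assume "gmul g h U \<noteq> 0"
  then obtain A where A: "finite U" "A \<subseteq> U" "g A \<noteq> 0" "h (U - A) \<noteq> 0"
    using gmul_nonzeroD by blast
  then have "card (U - A) = card U - card A" "card A \<le> card U"
    by (simp_all add: card_Diff_subset card_mono finite_subset)
  then have "card U = card A + card (U - A)" by simp
  moreover have "even (card A) = p" "even (card (U - A)) = q"
    using A assms unfolding homogeneous_def by blast+
  ultimately show "even (card U) = (p = q)" by (simp add: even_add)
qed

lemma homogeneous_gone: "homogeneous True gone"
  by (simp add: homogeneous_def gone_def)

lemma homogeneous_sum:
  assumes "\<And>i. i \<in> I \<Longrightarrow> homogeneous p (f i)"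
  shows "homogeneous p (\<lambda>U. \<Sum>i\<in>I. c i * f i U)"
  unfolding homogeneous_def
proof (intro allI impI)
  fix U assume "(\<Sum>i\<in>I. c i * f i U) \<noteq> 0"
  then obtain i where "i \<in> I" "c i * f i U \<noteq> 0"
    using sum.not_neutral_contains_not_neutral by blast
  with assms show "even (card U) = p" unfolding homogeneous_def by auto
qed

lemma Geven_iff: "g \<in> Geven t \<longleftrightarrow> g \<in> Gcar t \<and> homogeneous True g"
  by (simp add: Geven_def homogeneous_def)

lemma Godd_iff: "g \<in> Godd t \<longleftrightarrow> g \<in> Gcar t \<and> homogeneous False g"
  by (simp add: Godd_def homogeneous_def)

lemma gsign_swap_eq:
  assumes "finite S" "finite T" "S \<inter> T = {}"
  shows "(gsign T S :: 'a::field) = (-1) ^ (card S * card T) * gsign S T"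
proof -
  have "(gsign T S :: 'a) = (gsign S T * gsign S T) * gsign T S" by simp
  also have "\<dots> = gsign S T * (-1) ^ (card S * card T)"
    by (simp only: mult.assoc gsign_swap[OF assms])
  finally show ?thesis by (simp only: mult.commute)
qed

lemma gmul_commute_sign:
  assumes "gfinite g" "gfinite h"
    and sign: "\<And>S T. g S \<noteq> 0 \<Longrightarrow> h T \<noteq> 0 \<Longrightarrow> (-1) ^ (card S * card T) = e"
  shows "gmul h g = (\<lambda>U. e * gmul g h U)"
proof
  fix U
  show "gmul h g U = e * gmul g h U"
  proof (cases "finite U")
    case True
    have "gmul h g U = (\<Sum>S\<in>Pow U. gsign (U - S) (U - (U - S)) * h (U - S) * g (U - (U - S)))"
      unfolding gmul_def
    proof (rule sum.reindex_bij_witness[where i = "\<lambda>S. U - S" and j = "\<lambda>S. U - S"])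
      fix S assume "S \<in> Pow U"
      then have "U - (U - S) = S" by auto
      then show "gsign (U - (U - S)) (U - (U - (U - S))) * h (U - (U - S)) * g (U - (U - (U - S))) =
          gsign S (U - S) * h S * g (U - S)"
        by simp
    qed auto
    also have "\<dots> = (\<Sum>S\<in>Pow U. e * (gsign S (U - S) * g S * h (U - S)))"
    proof (rule sum.cong[OF refl])
      fix S assume S: "S \<in> Pow U"
      then have "U - (U - S) = S" "finite S" using True finite_subset by auto
      moreover have "g S \<noteq> 0 \<Longrightarrow> h (U - S) \<noteq> 0 \<Longrightarrow> (gsign (U - S) S :: 'a) = e * gsign S (U - S)"
        using gsign_swap_eq[of S "U - S"] sign True calculation(2) by auto
      ultimately show "gsign (U - S) (U - (U - S)) * h (U - S) * g (U - (U - S)) =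
          e * (gsign S (U - S) * g S * h (U - S))"
        by (cases "g S \<noteq> 0 \<and> h (U - S) \<noteq> 0") auto
    qed
    also have "\<dots> = e * gmul g h U"
      unfolding gmul_def by (simp add: sum_distrib_left)
    finally show ?thesis .
  qed (simp add: gmul_infinite)
qed

lemma gmul_commute_even:
  "gfinite g \<Longrightarrow> gfinite h \<Longrightarrow> homogeneous True g \<Longrightarrow> gmul h g = gmul g h"
  using gmul_commute_sign[of g h 1] unfolding homogeneous_def by auto

lemma gmul_anticommute_odd:
  "gfinite g \<Longrightarrow> gfinite h \<Longrightarrow> homogeneous False g \<Longrightarrow> homogeneous False h \<Longrightarrow>
    gmul h g = (\<lambda>U. - gmul g h U)"
  using gmul_commute_sign[of g h "-1"] unfolding homogeneous_def by auto

lemma gmul_anticommute_odd_left: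
  assumes "gfinite g" "gfinite h" "homogeneous False g" "homogeneous False h"
  shows "gmul h (gmul g k) = (\<lambda>U. (-1) * gmul g (gmul h k) U)"
proof -
  have "gmul h g = (\<lambda>U. (-1) * gmul g h U)" using gmul_anticommute_odd[OF assms] by simp
  then show ?thesis by (simp only: gmul_assoc[symmetric] gmul_scale_left)
qed

lemma gmul_self_odd:
  fixes g :: "nat set \<Rightarrow> 'a::field_char_0"
  assumes "gfinite g" "homogeneous False g"
  shows "gmul g g = (\<lambda>_. 0)"
proof
  fix U
  have "gmul g g U = - gmul g g U"
    using gmul_anticommute_odd[OF assms(1,1,2,2)] by metis
  then show "gmul g g U = 0" by simp
qed

lemma Gcar_lincomb:
  assumes "x \<in> Gcar t" "y \<in> Gcar t"
  shows "(\<lambda>U. c * x U + y U) \<in> Gcar t"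
  unfolding Gcar_def
proof (intro CollectI allI impI)
  fix U assume "c * x U + y U \<noteq> 0"
  then have "x U \<noteq> 0 \<or> y U \<noteq> 0" by auto
  with assms show "U \<subseteq> {1..t}" unfolding Gcar_def by blast
qed

lemma Gcar_sum:
  assumes "\<And>i. i \<in> I \<Longrightarrow> f i \<in> Gcar t"
  shows "(\<lambda>U. \<Sum>i\<in>I. c i * f i U) \<in> Gcar t"
  unfolding Gcar_def
proof (intro CollectI allI impI)
  fix U assume "(\<Sum>i\<in>I. c i * f i U) \<noteq> 0"
  then obtain i where "i \<in> I" "c i * f i U \<noteq> 0"
    using sum.not_neutral_contains_not_neutral by blast
  then have "f i \<in> Gcar t" "f i U \<noteq> 0" using assms by auto
  then show "U \<subseteq> {1..t}" unfolding Gcar_def by blast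
qed

lemma Gcenter_lincomb:
  assumes "x \<in> Gcenter t" "y \<in> Gcenter t"
  shows "(\<lambda>U. c * x U + y U) \<in> Gcenter t"
  using assms unfolding Gcenter_def by (simp add: Gcar_lincomb gmul_lincomb_left gmul_lincomb_right)

lemma Gcenter_zero: "(\<lambda>_. 0) \<in> Gcenter t"
  unfolding Gcenter_def Gcar_def by (simp add: gmul_def)

lemma Geven_subset_Gcenter: "Geven t \<subseteq> Gcenter t"
proof
  fix g assume "g \<in> Geven t"
  then have g: "g \<in> Gcar t" "homogeneous True g" by (simp_all add: Geven_iff)
  have "gmul g h = gmul h g" if "h \<in> Gcar t" for h
    using gmul_commute_even[OF Gcar_imp_gfinite[OF g(1)] Gcar_imp_gfinite[OF that] g(2)] by simp
  with g show "g \<in> Gcenter t" unfolding Gcenter_def by blast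
qed

text \<open>The part of \<open>h\<close> without constant term annihilates \<open>g\<close> from both sides.\<close>
lemma Gcenter_if_top_support:
  assumes g: "g \<in> Gcar t" and top: "\<And>S. g S \<noteq> 0 \<Longrightarrow> S = {1..t}"
  shows "g \<in> Gcenter t"
proof -
  have "gmul g h = gmul h g" if h: "h \<in> Gcar t" for h
  proof -
    define h' where "h' = (\<lambda>U. if U = {} then 0 else h U)"
    have h_split: "h = (\<lambda>U. h {} * gone U + h' U)"
      unfolding h'_def gone_def by auto
    have h'_supp: "S \<noteq> {} \<and> S \<subseteq> {1..t}" if "h' S \<noteq> 0" for S
    proof -
      have "S \<noteq> {}" "h S \<noteq> 0" using that unfolding h'_def by (auto split: if_split_asm)
      with h show ?thesis unfolding Gcar_def by blast
    qed
    have "gmul g h' U = 0" for U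
    proof (rule ccontr)
      assume "gmul g h' U \<noteq> 0"
      then obtain A where "A \<subseteq> U" "g A \<noteq> 0" "h' (U - A) \<noteq> 0" using gmul_nonzeroD by blast
      with top[of A] h'_supp[of "U - A"] show False by blast
    qed
    moreover have "gmul h' g U = 0" for U
    proof (rule ccontr)
      assume "gmul h' g U \<noteq> 0"
      then obtain A where "A \<subseteq> U" "h' A \<noteq> 0" "g (U - A) \<noteq> 0" using gmul_nonzeroD by blast
      with top[of "U - A"] h'_supp[of A] show False by blast
    qed
    ultimately have "gmul g h' = (\<lambda>_. 0)" "gmul h' g = (\<lambda>_. 0)" by auto
    moreover have "gfinite g" using g Gcar_imp_gfinite by blast
    ultimately show ?thesis
      by (subst (1 2) h_split) (simp add: gmul_lincomb_left gmul_lincomb_right gmul_gone_left gmul_gone_right)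
  qed
  with g show ?thesis unfolding Gcenter_def by blast
qed

section \<open>Generators and basis monomials\<close>

definition Ggen :: "nat \<Rightarrow> nat set \<Rightarrow> 'a::field" where
  "Ggen i = (\<lambda>T. if T = {i} then 1 else 0)"

definition Gbasis :: "nat set \<Rightarrow> nat set \<Rightarrow> 'a::field" where
  "Gbasis S = (\<lambda>T. if T = S then 1 else 0)"

lemma Ggen_Godd: "i \<in> {1..t} \<Longrightarrow> Ggen i \<in> Godd t"
  unfolding Ggen_def Godd_def Gcar_def by auto

lemma gmul_Ggen_right:
  assumes "finite S" "j \<notin> S"
  shows "gmul c (Ggen j) (insert j S) = gsign S {j} * c S"
proof -
  have "gmul c (Ggen j) (insert j S) =
      (if S \<in> Pow (insert j S) then gsign S (insert j S - S) * c S * Ggen j (insert j S - S) else 0)"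
    unfolding gmul_def
  proof (rule sum_eq_single)
    fix A assume "A \<in> Pow (insert j S)" "A \<noteq> S"
    then have "insert j S - A \<noteq> {j}" using assms by auto
    then show "gsign A (insert j S - A) * c A * Ggen j (insert j S - A) = 0" by (simp add: Ggen_def)
  qed (use assms in simp)
  moreover have "insert j S - S = {j}" using assms by auto
  ultimately show ?thesis by (simp add: Ggen_def subset_insertI)
qed

lemma gmul_Ggen_left:
  assumes "finite S" "j \<notin> S"
  shows "gmul (Ggen j) c (insert j S) = gsign {j} S * c S"
proof -
  have "gmul (Ggen j) c (insert j S) =
      (if {j} \<in> Pow (insert j S) then gsign {j} (insert j S - {j}) * Ggen j {j} * c (insert j S - {j}) else 0)"
    unfolding gmul_def by (rule sum_eq_single) (use assms in \<open>auto simp: Ggen_def\<close>)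
  moreover have "insert j S - {j} = S" using assms by auto
  ultimately show ?thesis by (simp add: Ggen_def)
qed

text \<open>Commuting a central element with a generator \<open>e\<^sub>j\<close>, \<open>j \<notin> S\<close>, compares the
  coefficients of \<open>e\<^sub>S e\<^sub>j\<close> and \<open>e\<^sub>j e\<^sub>S\<close>, which differ by the sign \<open>(-1)\<^bsup>|S|\<^esup>\<close>.\<close>
lemma Gcenter_odd_coeff_eq_0:
  fixes c :: "nat set \<Rightarrow> 'a::field_char_0"
  assumes c: "c \<in> Gcenter t" and S: "S \<subset> {1..t}" "odd (card S)"
  shows "c S = 0"
proof -
  obtain j where j: "j \<in> {1..t}" "j \<notin> S" using S by blast
  have fin: "finite S" using S finite_subset by blast
  have "gmul c (Ggen j) = gmul (Ggen j) c"
    using c j Ggen_Godd unfolding Gcenter_def Godd_def by blast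
  then have "gsign S {j} * c S = gsign {j} S * c S"
    using gmul_Ggen_right[OF fin j(2)] gmul_Ggen_left[OF fin j(2)] by metis
  then have "gsign S {j} * (gsign S {j} * c S) = gsign S {j} * (gsign {j} S * c S)" by simp
  moreover have "(gsign S {j} :: 'a) * gsign {j} S = -1"
    using gsign_swap[of S "{j}"] fin j S(2) by simp
  ultimately have "c S = - c S"
    by (simp add: mult.assoc[symmetric])
  then show ?thesis by simp
qed

lemma gmul_Ggen_Gbasis:
  assumes "finite T" "\<And>x. x \<in> T \<Longrightarrow> i < x"
  shows "gmul (Ggen i) (Gbasis T) = (Gbasis (insert i T) :: nat set \<Rightarrow> 'a::field)"
proof
  fix U
  show "(gmul (Ggen i) (Gbasis T) U :: 'a) = Gbasis (insert i T) U"
  proof (cases "finite U")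
    case True
    have "(gmul (Ggen i) (Gbasis T) U :: 'a) =
        (if {i} \<in> Pow U then gsign {i} (U - {i}) * Ggen i {i} * (Gbasis T (U - {i}) :: 'a) else 0)"
      unfolding gmul_def by (rule sum_eq_single) (auto simp: True Ggen_def)
    also have "\<dots> = Gbasis (insert i T) U"
    proof (cases "U = insert i T")
      case True
      have no_inv: "{(a, b). a \<in> {i} \<and> b \<in> T \<and> b < a} = {}" using assms(2) by fastforce
      have "gsign {i} T = (1::'a)" unfolding gsign_def no_inv by simp
      moreover have "U - {i} = T" using True assms by auto
      ultimately show ?thesis using True by (simp add: Ggen_def Gbasis_def)
    next
      case False
      then have "\<not> ({i} \<subseteq> U \<and> U - {i} = T)" by auto
      then show ?thesis using False by (auto simp: Ggen_def Gbasis_def)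
    qed
    finally show ?thesis .
  qed (use assms(1) in \<open>auto simp: gmul_infinite Gbasis_def\<close>)
qed

lemma gprod_Ggen_sorted:
  "sorted_wrt (<) L \<Longrightarrow> gprod (map Ggen L) = (Gbasis (set L) :: nat set \<Rightarrow> 'a::field)"
proof (induction L)
  case Nil
  then show ?case by (simp add: gone_def Gbasis_def fun_eq_iff)
next
  case (Cons a L)
  then show ?case by (simp add: gmul_Ggen_Gbasis)
qed

lemma gprod_append: "gprod (xs @ ys) = gmul (gprod xs) (gprod ys)"
  by (induction xs) (auto simp: gmul_gone_left gmul_assoc)

lemma gprod_eq_0_if_zero_factor: "(\<lambda>_. 0) \<in> set xs \<Longrightarrow> gprod xs = (\<lambda>_. 0)"
  by (induction xs) (auto simp: gmul_def)

definition Gscalar :: "'a \<Rightarrow> nat set \<Rightarrow> 'a::field" where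
  "Gscalar c = (\<lambda>U. c * gone U)"

lemma gfinite_Gscalar: "gfinite (Gscalar c)"
  unfolding gfinite_def Gscalar_def gone_def by auto

lemma gmul_Gscalar: "gfinite g \<Longrightarrow> gmul (Gscalar c) g = (\<lambda>U. c * g U)"
  unfolding Gscalar_def by (simp add: gmul_scale_left gmul_gone_left)

lemma gprod_Gscalar: "gprod (map Gscalar cs) = Gscalar (prod_list cs)"
proof (induction cs)
  case Nil
  then show ?case by (simp add: Gscalar_def)
next
  case (Cons a cs)
  then have "gprod (map Gscalar (a # cs)) = gmul (Gscalar a) (Gscalar (prod_list cs))" by simp
  also have "\<dots> = (\<lambda>U. a * Gscalar (prod_list cs) U)" by (rule gmul_Gscalar[OF gfinite_Gscalar])
  also have "\<dots> = Gscalar (prod_list (a # cs))" by (simp add: Gscalar_def mult.assoc)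
  finally show ?case .
qed

lemma Gscalar_Geven: "Gscalar c \<in> Geven t"
  unfolding Geven_def Gcar_def Gscalar_def gone_def by auto

section \<open>Admissible evaluations and normal ordering\<close>

definition zdeg :: "var list \<Rightarrow> nat" where
  "zdeg w = length (filter is_odd_var w)"

lemma zdeg_simps [simp]: "zdeg [] = 0" "zdeg (Y i # w) = zdeg w" "zdeg (Z i # w) = Suc (zdeg w)"
  by (auto simp: zdeg_def is_odd_var_def)

lemma zdeg_append [simp]: "zdeg (u @ v) = zdeg u + zdeg v"
  by (simp add: zdeg_def)

lemma zdeg_map_Y [simp]: "zdeg (map Y xs) = 0"
  and zdeg_map_Z [simp]: "zdeg (map Z xs) = length xs"
  by (induction xs) auto

lemma adm_Y: "adm t \<phi> \<Longrightarrow> \<phi> (Y i) \<in> Gcar t \<and> homogeneous True (\<phi> (Y i))"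
  unfolding adm_def Geven_iff by blast

lemma adm_Z: "adm t \<phi> \<Longrightarrow> \<phi> (Z i) \<in> Gcar t \<and> homogeneous False (\<phi> (Z i))"
  unfolding adm_def Godd_iff by blast

lemma gprod_adm:
  assumes "adm t \<phi>"
  shows "gprod (map \<phi> w) \<in> Gcar t \<and> homogeneous (even (zdeg w)) (gprod (map \<phi> w))"
proof (induction w)
  case Nil
  then show ?case by (simp add: Gcar_gone homogeneous_gone)
next
  case (Cons v w)
  show ?case
  proof (cases v)
    case (Y i)
    then show ?thesis
      using Cons adm_Y[OF assms, of i] homogeneous_gmul[of True "\<phi> (Y i)" "even (zdeg w)"]
      by (auto intro: Gcar_gmul)
  next
    case (Z i)
    then show ?thesis
      using Cons adm_Z[OF assms, of i] homogeneous_gmul[of False "\<phi> (Z i)" "even (zdeg w)"]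
      by (auto intro: Gcar_gmul)
  qed
qed

text \<open>Each odd factor contributes at least one generator.\<close>
lemma gprod_adm_nonzero_imp_zdeg_le_card:
  assumes "adm t \<phi>" "gprod (map \<phi> w) U \<noteq> 0"
  shows "zdeg w \<le> card U"
  using assms(2)
proof (induction w arbitrary: U)
  case (Cons v w)
  then obtain A where A: "finite U" "A \<subseteq> U" "\<phi> v A \<noteq> 0" "gprod (map \<phi> w) (U - A) \<noteq> 0"
    using gmul_nonzeroD[of "\<phi> v" "gprod (map \<phi> w)" U] by auto
  have "card (U - A) = card U - card A" "card A \<le> card U"
    using A by (simp_all add: card_Diff_subset card_mono finite_subset)
  moreover have "zdeg w \<le> card (U - A)" using Cons.IH A(4) by blast
  moreover have "card A \<ge> 1" if "v = Z i" for i
  proof -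
    have "odd (card A)" using adm_Z[OF assms(1), of i] A(3) that unfolding homogeneous_def by blast
    then show ?thesis by (cases "card A") auto
  qed
  ultimately show ?case by (cases v) auto
qed simp

fun yvars :: "var list \<Rightarrow> nat list" where
  "yvars [] = []"
| "yvars (Y i # w) = i # yvars w"
| "yvars (Z i # w) = yvars w"

fun zvars :: "var list \<Rightarrow> nat list" where
  "zvars [] = []"
| "zvars (Y i # w) = zvars w"
| "zvars (Z i # w) = i # zvars w"

definition rank :: "nat list \<Rightarrow> nat \<Rightarrow> nat" where
  "rank L j = length (filter (\<lambda>y. y < j) L)"

fun list_inversions :: "nat list \<Rightarrow> nat" where
  "list_inversions [] = 0"
| "list_inversions (x # xs) = rank xs x + list_inversions xs"

text \<open>Even values commute with everything and odd values anticommute, so the product along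
  a word can be normal-ordered into \<open>canon w\<close> at the cost of the sign \<open>canon_sign w\<close>,
  which is \<open>0\<close> when an odd variable repeats.\<close>
definition canon :: "var list \<Rightarrow> var list" where
  "canon w = map Y (sort (yvars w)) @ map Z (sort (zvars w))"

definition canon_sign :: "var list \<Rightarrow> 'a::field" where
  "canon_sign w = (if distinct (zvars w) then (-1) ^ list_inversions (zvars w) else 0)"

lemma length_zvars: "length (zvars w) = zdeg w"
  by (induction w rule: zvars.induct) auto

lemma length_yvars_le: "length (yvars w) \<le> length w"
  by (induction w rule: yvars.induct) auto

lemma yvars_append_map [simp]: "yvars (map Y a @ map Z b) = a"
  and zvars_append_map [simp]: "zvars (map Y a @ map Z b) = b"
  by (induction a) (induction b; simp)+

lemma yvars_canon: "yvars (canon w) = sort (yvars w)"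
  and zvars_canon: "zvars (canon w) = sort (zvars w)"
  by (simp_all add: canon_def)

lemma rank_sort [simp]: "rank (sort L) j = rank L j"
  by (simp add: rank_def filter_sort)

lemma canon_sign_Cons_Y [simp]: "canon_sign (Y i # w) = canon_sign w"
  by (simp add: canon_sign_def)

lemma canon_sign_Cons_Z:
  "canon_sign (Z j # w) =
    (if j \<in> set (zvars w) then 0 else (-1) ^ rank (zvars w) j * canon_sign w)"
  by (simp add: canon_sign_def power_add)

lemma gprod_insort_Y:
  assumes "adm t \<phi>"
  shows "gprod (map \<phi> (map Y (insort i L))) = gmul (\<phi> (Y i)) (gprod (map \<phi> (map Y L)))"
proof (induction L)
  case (Cons l L)
  have i: "gfinite (\<phi> (Y i))" "homogeneous True (\<phi> (Y i))" and l: "gfinite (\<phi> (Y l))"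
    using adm_Y[OF assms] Gcar_imp_gfinite by blast+
  have "gmul (\<phi> (Y l)) (\<phi> (Y i)) = gmul (\<phi> (Y i)) (\<phi> (Y l))"
    by (rule gmul_commute_even[OF i(1) l i(2)])
  with Cons.IH show ?case by (simp add: gmul_assoc[symmetric])
qed simp

lemma gprod_insort_Z:
  fixes \<phi> :: "var \<Rightarrow> nat set \<Rightarrow> 'a::field_char_0"
  assumes "adm t \<phi>" "sorted_wrt (<) L"
  shows "gmul (\<phi> (Z j)) (gprod (map \<phi> (map Z L))) =
    (if j \<in> set L then (\<lambda>_. 0)
     else (\<lambda>U. (-1) ^ rank L j * gprod (map \<phi> (map Z (insort j L))) U))"
  using assms(2)
proof (induction L)
  case (Cons l L)
  have sorted: "sorted_wrt (<) L" "\<And>x. x \<in> set L \<Longrightarrow> l < x" using Cons.prems by auto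
  have j: "gfinite (\<phi> (Z j))" "homogeneous False (\<phi> (Z j))"
    and l: "gfinite (\<phi> (Z l))" "homogeneous False (\<phi> (Z l))"
    using adm_Z[OF assms(1)] Gcar_imp_gfinite by blast+
  let ?R = "gprod (map \<phi> (map Z L))"
  consider "j < l" | "j = l" | "l < j" by linarith
  then show ?case
  proof cases
    case 1
    then have "j \<notin> set (l # L)" "rank (l # L) j = 0"
      using sorted(2) by (fastforce simp: rank_def filter_empty_conv)+
    with 1 show ?thesis by simp
  next
    case 2
    then show ?thesis using gmul_self_odd[OF j] by (simp add: gmul_assoc[symmetric])
  next
    case 3
    have swap: "gmul (\<phi> (Z j)) (gprod (map \<phi> (map Z (l # L)))) =
        (\<lambda>U. (-1) * gmul (\<phi> (Z l)) (gmul (\<phi> (Z j)) ?R) U)"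
      using gmul_anticommute_odd_left[OF l(1) j(1) l(2) j(2)] by simp
    show ?thesis
    proof (cases "j \<in> set L")
      case True
      then show ?thesis using swap Cons.IH[OF sorted(1)] by simp
    next
      case False
      have "insort j (l # L) = l # insort j L" "rank (l # L) j = Suc (rank L j)"
        using 3 by (simp_all add: rank_def)
      moreover have "gmul (\<phi> (Z l)) (gmul (\<phi> (Z j)) ?R) =
          (\<lambda>U. (-1) ^ rank L j * gmul (\<phi> (Z l)) (gprod (map \<phi> (map Z (insort j L)))) U)"
        using Cons.IH[OF sorted(1)] False by (simp add: gmul_scale_right)
      ultimately show ?thesis using swap False 3 by (simp add: fun_eq_iff)
    qed
  qed
qed (simp add: rank_def)

lemma gprod_canon_Cons_Y:
  assumes adm: "adm t \<phi>"
  shows "gmul (\<phi> (Y i)) (gprod (map \<phi> (canon w))) = gprod (map \<phi> (canon (Y i # w)))"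
proof -
  have "gprod (map \<phi> (canon (Y i # w))) =
      gmul (gprod (map \<phi> (map Y (insort i (sort (yvars w)))))) (gprod (map \<phi> (map Z (sort (zvars w)))))"
    by (simp add: canon_def gprod_append)
  also have "\<dots> = gmul (\<phi> (Y i)) (gprod (map \<phi> (canon w)))"
    unfolding gprod_insort_Y[OF adm] gmul_assoc by (simp add: canon_def gprod_append)
  finally show ?thesis ..
qed

lemma gprod_canon_Cons_Z:
  fixes \<phi> :: "var \<Rightarrow> nat set \<Rightarrow> 'a::field_char_0"
  assumes adm: "adm t \<phi>" and "distinct (zvars w)"
  shows "gmul (\<phi> (Z j)) (gprod (map \<phi> (canon w))) =
    (if j \<in> set (zvars w) then (\<lambda>_. 0)
     else (\<lambda>U. (-1) ^ rank (zvars w) j * gprod (map \<phi> (canon (Z j # w))) U))"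
proof -
  let ?B = "gprod (map \<phi> (map Y (sort (yvars w))))"
  let ?A = "gprod (map \<phi> (map Z (sort (zvars w))))"
  have "gmul (\<phi> (Z j)) ?B = gmul ?B (\<phi> (Z j))"
    using gprod_adm[OF adm, of "map Y (sort (yvars w))"] adm_Z[OF adm, of j]
    by (intro gmul_commute_even) (auto intro: Gcar_imp_gfinite)
  then have "gmul (\<phi> (Z j)) (gprod (map \<phi> (canon w))) = gmul ?B (gmul (\<phi> (Z j)) ?A)"
    by (simp add: canon_def gprod_append gmul_assoc[symmetric])
  moreover have "sorted_wrt (<) (sort (zvars w))"
    using assms(2) by (simp add: strict_sorted_iff)
  ultimately show ?thesis
    using gprod_insort_Z[OF adm, of "sort (zvars w)" j]
    by (simp add: canon_def gprod_append gmul_scale_right)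
qed

lemma gprod_canon:
  fixes \<phi> :: "var \<Rightarrow> nat set \<Rightarrow> 'a::field_char_0"
  assumes adm: "adm t \<phi>"
  shows "gprod (map \<phi> w) = (\<lambda>U. canon_sign w * gprod (map \<phi> (canon w)) U)"
proof (induction w)
  case Nil
  then show ?case by (simp add: canon_sign_def canon_def)
next
  case (Cons v w)
  then have eq: "gprod (map \<phi> (v # w)) =
      (\<lambda>U. canon_sign w * gmul (\<phi> v) (gprod (map \<phi> (canon w))) U)"
    by (simp add: gmul_scale_right)
  show ?case
  proof (cases v)
    case (Y i)
    then show ?thesis using eq gprod_canon_Cons_Y[OF adm] by simp
  next
    case (Z j)
    show ?thesis
    proof (cases "distinct (zvars w)")
      case False
      then show ?thesis using eq Z by (simp add: canon_sign_def)
    next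
      case True
      then show ?thesis using eq Z gprod_canon_Cons_Z[OF adm True, of j]
        by (cases "j \<in> set (zvars w)") (simp_all add: canon_sign_Cons_Z ac_simps)
    qed
  qed
qed

section \<open>Polynomials, evaluation and substitution\<close>

definition finite_supp :: "(var list \<Rightarrow> 'a::field) \<Rightarrow> bool" where
  "finite_supp f = finite {w. f w \<noteq> 0}"

lemma FA_iff: "f \<in> FA \<longleftrightarrow> finite_supp f \<and> f [] = 0"
  by (simp add: FA_def finite_supp_def)

lemma finite_supp_zero [simp]: "finite_supp (\<lambda>_. 0)"
  and finite_supp_mono [simp]: "finite_supp (mono u)"
  by (simp_all add: finite_supp_def mono_def)

lemma finite_supp_restrict: "finite_supp f \<Longrightarrow> finite_supp (\<lambda>w. if P w then f w else 0)"
  unfolding finite_supp_def by (rule finite_subset[rotated]) auto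

lemma finite_supp_lincomb:
  "finite_supp f \<Longrightarrow> finite_supp h \<Longrightarrow> finite_supp (\<lambda>u. c * f u + h u)"
  unfolding finite_supp_def by (rule finite_subset[of _ "{w. f w \<noteq> 0} \<union> {w. h w \<noteq> 0}"]) auto

lemma supp_sum_subset:
  fixes f :: "'i \<Rightarrow> var list \<Rightarrow> 'a::field"
  shows "{u. (\<Sum>i\<in>I. c i * f i u) \<noteq> 0} \<subseteq> (\<Union>i\<in>I. {w. f i w \<noteq> 0})"
proof
  fix u assume "u \<in> {u. (\<Sum>i\<in>I. c i * f i u) \<noteq> 0}"
  then obtain i where "i \<in> I" "c i * f i u \<noteq> 0"
    using sum.not_neutral_contains_not_neutral by blast
  then show "u \<in> (\<Union>i\<in>I. {w. f i w \<noteq> 0})" by auto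
qed

lemma finite_supp_sum:
  "finite I \<Longrightarrow> (\<And>i. i \<in> I \<Longrightarrow> finite_supp (f i)) \<Longrightarrow> finite_supp (\<lambda>u. \<Sum>i\<in>I. c i * f i u)"
  unfolding finite_supp_def using supp_sum_subset by (rule finite_subset) auto

lemma pmul_nonzeroD: "pmul p q w \<noteq> 0 \<Longrightarrow> \<exists>i. p (take i w) \<noteq> 0 \<and> q (drop i w) \<noteq> 0"
  unfolding pmul_def by (metis (no_types, lifting) mult_not_zero sum.neutral)

lemma supp_pmul_subset:
  "{w. pmul p q w \<noteq> 0} \<subseteq> (\<lambda>(u, v). u @ v) ` ({w. p w \<noteq> 0} \<times> {w. q w \<noteq> 0})"
proof
  fix w assume "w \<in> {w. pmul p q w \<noteq> 0}"
  then obtain i where "p (take i w) \<noteq> 0" "q (drop i w) \<noteq> 0" using pmul_nonzeroD by blast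
  then show "w \<in> (\<lambda>(u, v). u @ v) ` ({w. p w \<noteq> 0} \<times> {w. q w \<noteq> 0})"
    by (auto intro!: image_eqI[of _ _ "(take i w, drop i w)"])
qed

lemma finite_supp_pmul: "finite_supp p \<Longrightarrow> finite_supp q \<Longrightarrow> finite_supp (pmul p q)"
  unfolding finite_supp_def by (rule finite_subset[OF supp_pmul_subset]) auto

lemma finite_supp_pprod: "(\<And>p. p \<in> set ps \<Longrightarrow> finite_supp p) \<Longrightarrow> finite_supp (pprod ps)"
  by (induction ps) (auto intro: finite_supp_pmul)

lemma pprod_Nil_eq_0: "ps \<noteq> [] \<Longrightarrow> (\<And>p. p \<in> set ps \<Longrightarrow> p [] = 0) \<Longrightarrow> pprod ps [] = 0"
  by (cases ps) (auto simp: pmul_def)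

lemma pmul_mono: "pmul (mono u) (mono v) = (mono (u @ v) :: var list \<Rightarrow> 'a::field)"
proof
  fix w
  show "pmul (mono u) (mono v) w = (mono (u @ v) w :: 'a)"
  proof (cases "w = u @ v")
    case True
    have "pmul (mono u) (mono v) w = (if length u \<in> {..length w}
        then mono u (take (length u) w) * mono v (drop (length u) w) else (0::'a))"
      unfolding pmul_def
    proof (rule sum_eq_single)
      fix i assume "i \<in> {..length w}" "i \<noteq> length u"
      then have "take i w \<noteq> u" by auto
      then show "mono u (take i w) * mono v (drop i w) = (0::'a)" by (simp add: mono_def)
    qed simp
    then show ?thesis using True by (simp add: mono_def)
  next
    case False
    then have "(mono u (take i w) :: 'a) * mono v (drop i w) = 0" for i
      by (auto simp: mono_def)
    then have "pmul (mono u) (mono v) w = (0::'a)" unfolding pmul_def by (intro sum.neutral) blast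
    then show ?thesis using False by (simp add: mono_def)
  qed
qed

lemma pmul_mono_Nil_right: "pmul p (mono []) = p"
proof
  fix w
  have "pmul p (mono []) w = (if length w \<in> {..length w}
      then p (take (length w) w) * mono [] (drop (length w) w) else 0)"
    unfolding pmul_def by (rule sum_eq_single) (auto simp: mono_def)
  then show "pmul p (mono []) w = p w" by (simp add: mono_def)
qed

lemma pprod_map_mono: "pprod (map mono ws) = mono (concat ws)"
  by (induction ws) (auto simp: pmul_mono)

lemma evalG_eq_sum_superset:
  assumes "finite W" "{w. f w \<noteq> 0} \<subseteq> W"
  shows "evalG f \<phi> U = (\<Sum>w\<in>W. f w * gprod (map \<phi> w) U)"
  unfolding evalG_def by (rule sum.mono_neutral_left) (use assms in auto)

lemma evalG_zero [simp]: "evalG (\<lambda>_. 0) \<phi> = (\<lambda>_. 0)"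
  by (simp add: evalG_def fun_eq_iff)

lemma evalG_mono: "evalG (mono u) \<phi> = gprod (map \<phi> u)"
proof -
  have "{w. mono u w \<noteq> (0::'a)} = {u}" by (auto simp: mono_def)
  then show ?thesis by (simp add: evalG_def mono_def fun_eq_iff)
qed

lemma evalG_sum:
  assumes "finite I" "\<And>i. i \<in> I \<Longrightarrow> finite_supp (f i)"
  shows "evalG (\<lambda>u. \<Sum>i\<in>I. c i * f i u) \<phi> = (\<lambda>U. \<Sum>i\<in>I. c i * evalG (f i) \<phi> U)"
proof
  fix U
  let ?W = "\<Union>i\<in>I. {w. f i w \<noteq> 0}"
  have W: "finite ?W" using assms unfolding finite_supp_def by blast
  have "evalG (\<lambda>u. \<Sum>i\<in>I. c i * f i u) \<phi> U = (\<Sum>w\<in>?W. (\<Sum>i\<in>I. c i * f i w) * gprod (map \<phi> w) U)"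
    by (rule evalG_eq_sum_superset[OF W supp_sum_subset])
  also have "\<dots> = (\<Sum>i\<in>I. c i * (\<Sum>w\<in>?W. f i w * gprod (map \<phi> w) U))"
    by (simp add: sum_distrib_right sum_distrib_left ac_simps) (rule sum.swap)
  also have "\<dots> = (\<Sum>i\<in>I. c i * evalG (f i) \<phi> U)"
  proof (rule sum.cong[OF refl])
    fix i assume "i \<in> I"
    then have "evalG (f i) \<phi> U = (\<Sum>w\<in>?W. f i w * gprod (map \<phi> w) U)"
      by (intro evalG_eq_sum_superset[OF W]) auto
    then show "c i * (\<Sum>w\<in>?W. f i w * gprod (map \<phi> w) U) = c i * evalG (f i) \<phi> U" by simp
  qed
  finally show "evalG (\<lambda>u. \<Sum>i\<in>I. c i * f i u) \<phi> U = (\<Sum>i\<in>I. c i * evalG (f i) \<phi> U)" .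
qed

lemma evalG_lincomb:
  assumes "finite_supp f" "finite_supp h"
  shows "evalG (\<lambda>u. c * f u + h u) \<phi> = (\<lambda>U. c * evalG f \<phi> U + evalG h \<phi> U)"
proof -
  have "evalG (\<lambda>u. \<Sum>i\<in>{True, False}. (if i then c else 1) * (if i then f else h) u) \<phi> =
      (\<lambda>U. \<Sum>i\<in>{True, False}. (if i then c else 1) * evalG (if i then f else h) \<phi> U)"
    using assms by (intro evalG_sum) auto
  then show ?thesis by simp
qed

text \<open>Splitting each word of the support of \<open>pmul p q\<close> at every position pairs the
  supports of \<open>p\<close> and \<open>q\<close>.\<close>
lemma sum_pmul_eq_sum_pairs:
  fixes G :: "var list \<Rightarrow> 'a::field"
  assumes "finite_supp p" "finite_supp q"
  defines "P \<equiv> {w. p w \<noteq> 0}" and "Q \<equiv> {w. q w \<noteq> 0}"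
  shows "(\<Sum>w\<in>(\<lambda>(u, v). u @ v) ` (P \<times> Q). pmul p q w * G w) = (\<Sum>(u, v)\<in>P \<times> Q. p u * q v * G (u @ v))"
proof -
  let ?W = "(\<lambda>(u, v). u @ v) ` (P \<times> Q)"
  let ?S = "Sigma ?W (\<lambda>w. {..length w})"
  let ?S' = "{(w, i). (w, i) \<in> ?S \<and> p (take i w) \<noteq> 0 \<and> q (drop i w) \<noteq> 0}"
  have W: "finite ?W" using assms unfolding finite_supp_def P_def Q_def by auto
  have "(\<Sum>w\<in>?W. pmul p q w * G w) = (\<Sum>w\<in>?W. \<Sum>i\<in>{..length w}. p (take i w) * q (drop i w) * G w)"
    unfolding pmul_def by (simp add: sum_distrib_right)
  also have "\<dots> = (\<Sum>(w, i)\<in>?S. p (take i w) * q (drop i w) * G w)"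
    by (rule sum.Sigma) (use W in auto)
  also have "\<dots> = (\<Sum>(w, i)\<in>?S'. p (take i w) * q (drop i w) * G w)"
    by (rule sum.mono_neutral_right) (use W in auto)
  also have "\<dots> = (\<Sum>(u, v)\<in>P \<times> Q. p u * q v * G (u @ v))"
  proof (rule sum.reindex_bij_witness[where i = "\<lambda>(u, v). (u @ v, length u)"
        and j = "\<lambda>(w, i). (take i w, drop i w)"])
    fix a assume "a \<in> ?S'"
    then obtain w i where "a = (w, i)" "i \<le> length w" by auto
    then show "(case case a of (w, i) \<Rightarrow> (take i w, drop i w) of (u, v) \<Rightarrow> (u @ v, length u)) = a"
      by (simp add: min_def)
  next
    fix b assume "b \<in> P \<times> Q"
    then show "(case b of (u, v) \<Rightarrow> (u @ v, length u)) \<in> ?S'"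
      unfolding P_def Q_def by (auto intro!: image_eqI[of _ _ b])
  next
    fix a :: "var list \<times> nat"
    obtain w i where wi: "a = (w, i)" by (cases a)
    show "(case case a of (w, i) \<Rightarrow> (take i w, drop i w) of (u, v) \<Rightarrow> p u * q v * G (u @ v)) =
        (case a of (w, i) \<Rightarrow> p (take i w) * q (drop i w) * G w)"
      by (simp only: wi prod.case append_take_drop_id)
  qed (auto simp: P_def Q_def min_def)
  finally show ?thesis .
qed

lemma evalG_pmul:
  assumes "finite_supp p" "finite_supp q"
  shows "evalG (pmul p q) \<phi> = gmul (evalG p \<phi>) (evalG q \<phi>)"
proof
  fix U
  let ?P = "{w. p w \<noteq> 0}" and ?Q = "{w. q w \<noteq> 0}"
  let ?G = "\<lambda>w. gprod (map \<phi> w)"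
  have P: "finite ?P" and Q: "finite ?Q" using assms by (auto simp: finite_supp_def)
  have "evalG (pmul p q) \<phi> U = (\<Sum>w\<in>(\<lambda>(u, v). u @ v) ` (?P \<times> ?Q). pmul p q w * ?G w U)"
    by (rule evalG_eq_sum_superset[OF _ supp_pmul_subset]) (use P Q in auto)
  also have "\<dots> = (\<Sum>(u, v)\<in>?P \<times> ?Q. p u * q v * ?G (u @ v) U)"
    by (rule sum_pmul_eq_sum_pairs[OF assms])
  also have "\<dots> = (\<Sum>u\<in>?P. \<Sum>v\<in>?Q. p u * q v * gmul (?G u) (?G v) U)"
    by (simp add: sum.cartesian_product gprod_append)
  also have "\<dots> = gmul (evalG p \<phi>) (evalG q \<phi>) U"
    unfolding evalG_def by (simp add: gmul_sum_left[OF P] gmul_sum_right[OF Q] sum_distrib_left ac_simps)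
  finally show "evalG (pmul p q) \<phi> U = gmul (evalG p \<phi>) (evalG q \<phi>) U" .
qed

lemma evalG_pprod:
  "(\<And>p. p \<in> set ps \<Longrightarrow> finite_supp p) \<Longrightarrow> evalG (pprod ps) \<phi> = gprod (map (\<lambda>p. evalG p \<phi>) ps)"
  by (induction ps) (simp_all add: evalG_mono evalG_pmul finite_supp_pprod)

lemma evalG_subst:
  assumes g: "finite_supp g" and \<sigma>: "\<And>v. finite_supp (\<sigma> v)"
  shows "evalG (subst g \<sigma>) \<phi> = evalG g (\<lambda>v. evalG (\<sigma> v) \<phi>)"
proof -
  have "evalG (subst g \<sigma>) \<phi> = (\<lambda>U. \<Sum>w\<in>{w. g w \<noteq> 0}. g w * evalG (pprod (map \<sigma> w)) \<phi> U)"
    unfolding subst_def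
    by (rule evalG_sum) (use g \<sigma> in \<open>auto simp: finite_supp_def[of g] intro!: finite_supp_pprod\<close>)
  also have "\<dots> = evalG g (\<lambda>v. evalG (\<sigma> v) \<phi>)"
  proof -
    have "evalG (pprod (map \<sigma> w)) \<phi> = gprod (map (\<lambda>v. evalG (\<sigma> v) \<phi>) w)" for w
      using evalG_pprod[of "map \<sigma> w" \<phi>] \<sigma> by (auto simp: o_def)
    then show ?thesis by (simp add: evalG_def[of g])
  qed
  finally show ?thesis .
qed

lemma subst_FA:
  assumes g: "g \<in> FA" and \<sigma>: "\<And>v. \<sigma> v \<in> FA"
  shows "subst g \<sigma> \<in> FA"
proof -
  have "finite_supp (subst g \<sigma>)"
    unfolding subst_def using g \<sigma>
    by (intro finite_supp_sum) (auto simp: FA_iff finite_supp_def[of g] intro!: finite_supp_pprod)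
  moreover have "g w * pprod (map \<sigma> w) [] = 0" for w
    using g \<sigma> by (cases "w = []") (auto simp: FA_iff intro!: pprod_Nil_eq_0)
  then have "subst g \<sigma> [] = 0"
    unfolding subst_def by (intro sum.neutral) blast
  ultimately show ?thesis by (simp add: FA_iff)
qed

lemma subst_mono: "subst (mono u) \<sigma> = pprod (map \<sigma> u)"
proof -
  have "{w. mono u w \<noteq> (0::'a)} = {u}" by (auto simp: mono_def)
  then show ?thesis by (simp add: subst_def mono_def fun_eq_iff)
qed

lemma subst_singletons:
  fixes f :: "var list \<Rightarrow> 'a::field"
  assumes f: "finite_supp f"
  shows "subst f (\<lambda>v. mono [v]) = f"
proof
  fix u
  have "pprod (map (\<lambda>v. mono [v]) w) = (mono w :: var list \<Rightarrow> 'a)" for w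
    by (induction w) (auto simp: pmul_mono)
  then have "subst f (\<lambda>v. mono [v]) u = (\<Sum>w\<in>{w. f w \<noteq> 0}. f w * mono w u)"
    by (simp add: subst_def)
  also have "\<dots> = f u"
    using f by (subst sum_eq_single) (auto simp: finite_supp_def mono_def)
  finally show "subst f (\<lambda>v. mono [v]) u = f u" .
qed

lemma evalG_homogeneous:
  assumes adm: "adm t \<phi>" and f: "finite_supp f"
    and par: "\<And>w. f w \<noteq> 0 \<Longrightarrow> (even (zdeg w) \<longleftrightarrow> p)"
  shows "evalG f \<phi> \<in> Gcar t \<and> homogeneous p (evalG f \<phi>)"
proof -
  have e: "evalG f \<phi> = (\<lambda>U. \<Sum>w\<in>{w. f w \<noteq> 0}. f w * gprod (map \<phi> w) U)"
    by (simp add: evalG_def fun_eq_iff)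
  show ?thesis
    unfolding e using gprod_adm[OF adm] par by (auto intro!: Gcar_sum homogeneous_sum)
qed

lemma evalG_Geven: "adm t \<phi> \<Longrightarrow> p \<in> FA \<Longrightarrow> even_poly p \<Longrightarrow> evalG p \<phi> \<in> Geven t"
  using evalG_homogeneous[of t \<phi> p True] unfolding Geven_iff FA_iff even_poly_def zdeg_def by blast

lemma evalG_Godd: "adm t \<phi> \<Longrightarrow> p \<in> FA \<Longrightarrow> odd_poly p \<Longrightarrow> evalG p \<phi> \<in> Godd t"
  using evalG_homogeneous[of t \<phi> p False] unfolding Godd_iff FA_iff odd_poly_def zdeg_def by blast

lemma adm_evalG_graded_subst: "graded_subst \<sigma> \<Longrightarrow> adm t \<phi> \<Longrightarrow> adm t (\<lambda>v. evalG (\<sigma> v) \<phi>)"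
  unfolding graded_subst_def adm_def using evalG_Geven evalG_Godd by (metis adm_def)

section \<open>Kronecker substitution\<close>

lemma base_digits_unique:
  fixes f g :: "nat \<Rightarrow> nat"
  assumes "\<And>i. i < N \<Longrightarrow> f i < D" "\<And>i. i < N \<Longrightarrow> g i < D"
    and "(\<Sum>i<N. f i * D ^ i) = (\<Sum>i<N. g i * D ^ i)" "i < N"
  shows "f i = g i"
  using assms
proof (induction N arbitrary: f g i)
  case (Suc N)
  have shift: "(\<Sum>i<Suc N. h i * D ^ i) = h 0 + D * (\<Sum>i<N. h (Suc i) * D ^ i)" for h :: "nat \<Rightarrow> nat"
    by (subst sum.lessThan_Suc_shift) (simp add: sum_distrib_left ac_simps)
  have "f 0 < D" "g 0 < D" using Suc.prems by auto
  moreover have eq: "f 0 + D * (\<Sum>i<N. f (Suc i) * D ^ i) = g 0 + D * (\<Sum>i<N. g (Suc i) * D ^ i)"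
    using Suc.prems(3) shift by metis
  ultimately have "f 0 = g 0"
    by (metis mod_mult_self2 mod_less)
  with eq \<open>f 0 < D\<close> have "(\<Sum>i<N. f (Suc i) * D ^ i) = (\<Sum>i<N. g (Suc i) * D ^ i)" by simp
  then have "f (Suc j) = g (Suc j)" if "j < N" for j
    using Suc.IH[of "\<lambda>i. f (Suc i)" "\<lambda>i. g (Suc i)" j] Suc.prems that by auto
  with \<open>f 0 = g 0\<close> Suc.prems(4) show ?case by (cases i) auto
qed simp

lemma sum_list_powers_eq_count_sum:
  assumes "\<And>x. x \<in> set a \<Longrightarrow> x < N"
  shows "(\<Sum>i\<leftarrow>a. D ^ i) = (\<Sum>i<N. count_list a i * (D::nat) ^ i)"
  using assms
proof (induction a)
  case (Cons x a)
  have "(\<Sum>i<N. count_list (x # a) i * D ^ i) = (\<Sum>i<N. count_list a i * D ^ i + (if i = x then D ^ i else 0))"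
    by (rule sum.cong) auto
  also have "\<dots> = (\<Sum>i<N. count_list a i * D ^ i) + D ^ x"
    using Cons.prems by (simp add: sum.distrib)
  finally show ?case using Cons by simp
qed simp

text \<open>Kronecker substitution: the base-\<open>D\<close> digits of the sum are the multiplicities.\<close>
lemma mset_eq_if_sum_list_powers_eq:
  fixes a b :: "nat list"
  assumes "length a < D" "length b < D" "(\<Sum>i\<leftarrow>a. D ^ i) = (\<Sum>i\<leftarrow>b. D ^ i)"
  shows "mset a = mset b"
proof -
  define N where "N = Suc (Max (set a \<union> set b))"
  have below: "x < N" if "x \<in> set a \<union> set b" for x
    using that unfolding N_def by (simp add: le_imp_less_Suc)
  have "(\<Sum>i<N. count_list a i * D ^ i) = (\<Sum>i<N. count_list b i * D ^ i)"
    using assms(3) sum_list_powers_eq_count_sum[of a N D] sum_list_powers_eq_count_sum[of b N D] below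
    by simp
  moreover have "count_list a i < D" "count_list b i < D" for i
    using assms(1,2) count_le_length[of a i] count_le_length[of b i] by linarith+
  ultimately have "count_list a i = count_list b i" if "i < N" for i
    using base_digits_unique[of N "count_list a" D "count_list b" i] that by blast
  moreover have "count_list a i = count_list b i" if "\<not> i < N" for i
    using that below by (metis UnCI count_list_0_iff)
  ultimately show ?thesis
    by (metis count_mset multiset_eqI)
qed

lemma sum_powers_eq_0_imp_coeff_eq_0:
  fixes a :: "'k \<Rightarrow> 'a::field_char_0"
  assumes "finite K" "inj_on E K" "\<And>x. (\<Sum>k\<in>K. a k * x ^ E k) = 0" "k \<in> K"
  shows "a k = 0"
proof -
  define p where "p = (\<Sum>k\<in>K. monom (a k) (E k))"
  have "poly p x = 0" for x
    unfolding p_def by (simp add: poly_sum poly_monom assms(3))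
  then have "p = 0" using poly_all_0_iff_0 by blast
  moreover have "coeff p (E k) = (\<Sum>k'\<in>K. if E k' = E k then a k' else 0)"
    unfolding p_def by (simp add: coeff_sum)
  moreover have "\<dots> = a k"
    using assms(1,2,4) by (simp add: inj_on_eq_iff cong: if_cong)
  ultimately show ?thesis by simp
qed

section \<open>Central polynomials with few odd variables\<close>

definition canon_coeff :: "(var list \<Rightarrow> 'a::field) \<Rightarrow> var list \<Rightarrow> 'a" where
  "canon_coeff r c = (\<Sum>w\<in>{w. r w \<noteq> 0 \<and> canon w = c}. r w * canon_sign w)"

lemma evalG_canon:
  fixes \<phi> :: "var \<Rightarrow> nat set \<Rightarrow> 'a::field_char_0"
  assumes fin: "finite_supp r" and adm: "adm t \<phi>"
  shows "evalG r \<phi> U = (\<Sum>c\<in>canon ` {w. r w \<noteq> 0}. canon_coeff r c * gprod (map \<phi> c) U)"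
proof -
  let ?P = "{w. r w \<noteq> 0}"
  have P: "finite ?P" using fin by (simp add: finite_supp_def)
  have "gprod (map \<phi> w) U = canon_sign w * gprod (map \<phi> (canon w)) U" for w
    using fun_cong[OF gprod_canon[OF adm, of w], of U] by simp
  then have "evalG r \<phi> U = (\<Sum>w\<in>?P. r w * (canon_sign w * gprod (map \<phi> (canon w)) U))"
    unfolding evalG_def by (intro sum.cong refl arg_cong2[where f = "(*)"])
  also have "\<dots> = (\<Sum>c\<in>canon ` ?P. \<Sum>w\<in>{x. x \<in> ?P \<and> canon x = c}.
      r w * (canon_sign w * gprod (map \<phi> (canon w)) U))"
    by (rule sum.image_gen[OF P])
  also have "\<dots> = (\<Sum>c\<in>canon ` ?P. canon_coeff r c * gprod (map \<phi> c) U)"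
    unfolding canon_coeff_def sum_distrib_right by (intro sum.cong) (auto simp: ac_simps)
  finally show ?thesis .
qed

lemma canon_coeff_eq_0_if_not_distinct: "\<not> distinct (zvars c) \<Longrightarrow> canon_coeff r c = 0"
  unfolding canon_coeff_def canon_sign_def by (intro sum.neutral) (auto simp: zvars_canon)

lemma rank_less_rank:
  assumes "j \<in> set L" "j < j'"
  shows "rank L j < rank L j'"
proof -
  have "filter (\<lambda>y. y < j) (filter (\<lambda>y. y < j') L) = filter (\<lambda>y. y < j) L"
    using assms(2) by (simp add: filter_filter) (metis less_trans)
  moreover have "length (filter (\<lambda>y. y < j) (filter (\<lambda>y. y < j') L)) < length (filter (\<lambda>y. y < j') L)"
    by (rule length_filter_less[of j]) (use assms in auto)
  ultimately show ?thesis by (simp add: rank_def)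
qed

lemma inj_on_rank: "inj_on (rank L) (set L)"
proof (rule inj_onI)
  fix x y assume "x \<in> set L" "y \<in> set L" "rank L x = rank L y"
  then show "x = y"
    using rank_less_rank[of x L y] rank_less_rank[of y L x] by (cases x y rule: linorder_cases) auto
qed

lemma rank_less_length: "j \<in> set L \<Longrightarrow> rank L j < length L"
  unfolding rank_def by (rule length_filter_less) auto

lemma rank_image: "distinct L \<Longrightarrow> rank L ` set L = {..<length L}"
  using card_image[OF inj_on_rank[of L]] rank_less_length[of _ L]
  by (intro card_subset_eq) (auto simp: distinct_card)

lemma Suc_rank_image: "distinct L \<Longrightarrow> (\<lambda>j. Suc (rank L j)) ` set L = {1..length L}"
  by (simp only: image_image[symmetric] rank_image image_Suc_lessThan)

text \<open>The coefficient of \<open>e\<^sub>1 \<cdots> e\<^bsub>|L|\<^esub>\<close> under this substitution singles out the normal monomials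
  whose odd variables are exactly \<open>L\<close>, each weighted by \<open>\<lambda>\<close> to the Kronecker exponent of
  its even variables.\<close>
definition kron_subst :: "'a::field \<Rightarrow> nat \<Rightarrow> nat list \<Rightarrow> var \<Rightarrow> nat set \<Rightarrow> 'a" where
  "kron_subst lam D L = (\<lambda>v. case v of
      Y i \<Rightarrow> Gscalar (lam ^ (D ^ i))
    | Z j \<Rightarrow> if j \<in> set L then Ggen (Suc (rank L j)) else (\<lambda>_. 0))"

lemma adm_kron_subst:
  assumes "length L \<le> t"
  shows "adm t (kron_subst lam D L)"
  unfolding adm_def
proof (intro conjI allI)
  fix i show "kron_subst lam D L (Y i) \<in> Geven t" by (simp add: kron_subst_def Gscalar_Geven)
next
  fix j
  have "Suc (rank L j) \<in> {1..t}" if "j \<in> set L"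
    using rank_less_length[OF that] assms by auto
  moreover have "(\<lambda>_. 0) \<in> Godd t" by (simp add: Godd_def Gcar_def)
  ultimately show "kron_subst lam D L (Z j) \<in> Godd t"
    unfolding kron_subst_def using Ggen_Godd by (cases "j \<in> set L") auto
qed

lemma gprod_kron_subst_Y:
  "gprod (map (kron_subst lam D L) (map Y a @ ws)) =
    (\<lambda>U. lam ^ (\<Sum>i\<leftarrow>a. D ^ i) * gprod (map (kron_subst lam D L) ws) U)"
proof -
  let ?\<psi> = "kron_subst lam D L"
  have Y_part: "map ?\<psi> (map Y a) = map Gscalar (map (\<lambda>i. lam ^ (D ^ i)) a)"
    by (simp add: kron_subst_def)
  have prod_eq: "prod_list (map (\<lambda>i. lam ^ (D ^ i)) a) = lam ^ (\<Sum>i\<leftarrow>a. D ^ i)"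
    by (induction a) (auto simp: power_add)
  have "gprod (map ?\<psi> (map Y a @ ws)) = gmul (gprod (map ?\<psi> (map Y a))) (gprod (map ?\<psi> ws))"
    by (simp only: map_append gprod_append)
  also have "\<dots> = gmul (Gscalar (lam ^ (\<Sum>i\<leftarrow>a. D ^ i))) (gprod (map ?\<psi> ws))"
    by (simp only: Y_part gprod_Gscalar prod_eq)
  also have "\<dots> = (\<lambda>U. lam ^ (\<Sum>i\<leftarrow>a. D ^ i) * gprod (map ?\<psi> ws) U)"
    by (rule gmul_Gscalar) simp
  finally show ?thesis .
qed

lemma gprod_kron_subst_Z:
  assumes L: "sorted_wrt (<) L" and b: "sorted_wrt (<) b"
  shows "gprod (map (kron_subst lam D L) (map Z b)) {1..length L} = (if b = L then 1 else 0)"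
proof (cases "set b \<subseteq> set L")
  case True
  have map_eq: "map (kron_subst lam D L) (map Z b) = map Ggen (map (\<lambda>j. Suc (rank L j)) b)"
    using True by (auto simp: kron_subst_def)
  have sorted: "sorted_wrt (<) (map (\<lambda>j. Suc (rank L j)) b)"
    unfolding sorted_wrt_map
    by (rule sorted_wrt_mono_rel[OF _ b]) (use True rank_less_rank in auto)
  have inj: "inj_on (\<lambda>j. Suc (rank L j)) (set L)"
    using inj_on_rank by (simp add: inj_on_def)
  have "(\<lambda>j. Suc (rank L j)) ` set b = {1..length L} \<longleftrightarrow> b = L"
  proof
    assume "(\<lambda>j. Suc (rank L j)) ` set b = {1..length L}"
    then have "(\<lambda>j. Suc (rank L j)) ` set b = (\<lambda>j. Suc (rank L j)) ` set L"
      using Suc_rank_image L by (simp add: strict_sorted_iff)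
    then have "set b = set L" using inj_on_image_eq_iff[OF inj True order_refl] by blast
    then show "b = L" using strict_sorted_equal[OF b L] by simp
  qed (use L Suc_rank_image in \<open>simp add: strict_sorted_iff\<close>)
  moreover have "gprod (map (kron_subst lam D L) (map Z b)) = Gbasis ((\<lambda>j. Suc (rank L j)) ` set b)"
    unfolding map_eq gprod_Ggen_sorted[OF sorted] by simp
  ultimately show ?thesis by (auto simp: Gbasis_def)
next
  case False
  then have "(\<lambda>_. 0) \<in> set (map (kron_subst lam D L) (map Z b))" by (force simp: kron_subst_def)
  then show ?thesis using False by (auto simp: gprod_eq_0_if_zero_factor)
qed

lemma kron_sum_eq_0:
  fixes r :: "var list \<Rightarrow> 'a::field_char_0"
  assumes fin: "finite_supp r" and central: "\<And>\<phi>. adm t \<phi> \<Longrightarrow> evalG r \<phi> \<in> Gcenter t"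
    and L: "sorted_wrt (<) L" "odd (length L)" "length L < t"
  shows "(\<Sum>c\<in>{c \<in> canon ` {w. r w \<noteq> 0}. zvars c = L}.
           canon_coeff r c * lam ^ (\<Sum>i\<leftarrow>yvars c. D ^ i)) = 0"
proof -
  let ?P = "{w. r w \<noteq> 0}" and ?\<psi> = "kron_subst lam D L" and ?U = "{1..length L}"
  have P: "finite ?P" using fin by (simp add: finite_supp_def)
  have adm: "adm t ?\<psi>" by (rule adm_kron_subst) (use L in simp)
  have "?U \<subset> {1..t}" "odd (card ?U)" using L by auto
  then have "0 = evalG r ?\<psi> ?U"
    using Gcenter_odd_coeff_eq_0[OF central[OF adm]] by simp
  also have "\<dots> = (\<Sum>c\<in>canon ` ?P. canon_coeff r c * gprod (map ?\<psi> c) ?U)"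
    by (rule evalG_canon[OF fin adm])
  also have "\<dots> = (\<Sum>c\<in>canon ` ?P. if zvars c = L then canon_coeff r c * lam ^ (\<Sum>i\<leftarrow>yvars c. D ^ i) else 0)"
  proof (rule sum.cong[OF refl])
    fix c assume "c \<in> canon ` ?P"
    then obtain a b where c: "c = map Y a @ map Z b" "sorted b"
      by (auto simp: canon_def)
    show "canon_coeff r c * gprod (map ?\<psi> c) ?U =
        (if zvars c = L then canon_coeff r c * lam ^ (\<Sum>i\<leftarrow>yvars c. D ^ i) else 0)"
    proof (cases "distinct (zvars c)")
      case False
      then show ?thesis using L(1) by (auto simp: canon_coeff_eq_0_if_not_distinct strict_sorted_iff)
    next
      case True
      then have "sorted_wrt (<) b" using c by (simp add: strict_sorted_iff)
      then have "gprod (map ?\<psi> c) ?U = (if zvars c = L then lam ^ (\<Sum>i\<leftarrow>yvars c. D ^ i) else 0)"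
        unfolding c(1) gprod_kron_subst_Y using gprod_kron_subst_Z[OF L(1), of b lam D] by simp
      then show ?thesis by simp
    qed
  qed
  also have "\<dots> = (\<Sum>c\<in>{c \<in> canon ` ?P. zvars c = L}. canon_coeff r c * lam ^ (\<Sum>i\<leftarrow>yvars c. D ^ i))"
    using P by (simp add: sum.inter_filter)
  finally show ?thesis ..
qed

lemma inj_on_kronecker_exponent:
  assumes "\<And>w. w \<in> W \<Longrightarrow> length w < D"
  shows "inj_on (\<lambda>c. \<Sum>i\<leftarrow>yvars c. D ^ i) {c \<in> canon ` W. zvars c = L}"
proof (rule inj_onI)
  fix c1 c2
  assume c12: "c1 \<in> {c \<in> canon ` W. zvars c = L}" "c2 \<in> {c \<in> canon ` W. zvars c = L}"
    "(\<Sum>i\<leftarrow>yvars c1. D ^ i) = (\<Sum>i\<leftarrow>yvars c2. D ^ i)"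
  have short: "length (yvars c) < D" if "c \<in> canon ` W" for c
  proof -
    obtain w where "w \<in> W" "c = canon w" using \<open>c \<in> canon ` W\<close> by blast
    then show ?thesis using assms[of w] length_yvars_le[of w] by (simp add: yvars_canon)
  qed
  have "mset (yvars c1) = mset (yvars c2)"
    using c12 short by (intro mset_eq_if_sum_list_powers_eq) auto
  moreover have "sorted (yvars c1)" "sorted (yvars c2)"
    using c12 by (auto simp: yvars_canon)
  ultimately have "yvars c1 = yvars c2"
    using properties_for_sort[of "yvars c2" "yvars c1"] sorted_sort_id[of "yvars c1"] by simp
  moreover obtain a1 b1 a2 b2 where "c1 = map Y a1 @ map Z b1" "c2 = map Y a2 @ map Z b2"
    using c12 by (auto simp: canon_def)
  ultimately show "c1 = c2" using c12 by simp
qed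

lemma canon_coeff_eq_0:
  fixes r :: "var list \<Rightarrow> 'a::field_char_0"
  assumes fin: "finite_supp r" and central: "\<And>\<phi>. adm t \<phi> \<Longrightarrow> evalG r \<phi> \<in> Gcenter t"
    and low: "\<And>w. r w \<noteq> 0 \<Longrightarrow> odd (zdeg w) \<and> zdeg w < t"
    and c: "c \<in> canon ` {w. r w \<noteq> 0}"
  shows "canon_coeff r c = 0"
proof (cases "distinct (zvars c)")
  case False
  then show ?thesis by (rule canon_coeff_eq_0_if_not_distinct)
next
  case True
  let ?P = "{w. r w \<noteq> 0}"
  let ?K = "{c' \<in> canon ` ?P. zvars c' = zvars c}"
  define D where "D = Suc (Max (length ` ?P))"
  have P: "finite ?P" using fin by (simp add: finite_supp_def)
  obtain w0 where w0: "r w0 \<noteq> 0" "c = canon w0" using c by blast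
  have L: "sorted_wrt (<) (zvars c)" "odd (length (zvars c))" "length (zvars c) < t"
    using True w0 low[OF w0(1)] by (auto simp: zvars_canon strict_sorted_iff length_zvars)
  have "length w < D" if "w \<in> ?P" for w
    unfolding D_def using P that by (simp add: le_imp_less_Suc)
  then have inj: "inj_on (\<lambda>c. \<Sum>i\<leftarrow>yvars c. D ^ i) ?K"
    by (rule inj_on_kronecker_exponent)
  have "finite ?K" "c \<in> ?K" using P c by simp_all
  then show ?thesis
    using sum_powers_eq_0_imp_coeff_eq_0[OF _ inj kron_sum_eq_0[OF fin central L]] by blast
qed

lemma central_low_odd_evalG_eq_0:
  fixes r :: "var list \<Rightarrow> 'a::field_char_0"
  assumes "finite_supp r" "\<And>\<phi>. adm t \<phi> \<Longrightarrow> evalG r \<phi> \<in> Gcenter t"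
    and "\<And>w. r w \<noteq> 0 \<Longrightarrow> odd (zdeg w) \<and> zdeg w < t" and "adm t \<phi>"
  shows "evalG r \<phi> = (\<lambda>_. 0)"
  using evalG_canon[OF assms(1,4)] canon_coeff_eq_0[OF assms(1-3)] by (simp add: fun_eq_iff)

section \<open>\<open>T\<^sub>2\<close>-spaces and central polynomials\<close>

lemma FA_zero: "(\<lambda>_. 0) \<in> FA"
  by (simp add: FA_iff)

lemma mono_FA: "u \<noteq> [] \<Longrightarrow> mono u \<in> FA"
  using finite_supp_mono[of u] by (simp add: FA_iff mono_def)

lemma graded_subst_FA: "graded_subst \<sigma> \<Longrightarrow> \<sigma> v \<in> FA"
  unfolding graded_subst_def by (cases v) auto

lemma T2span_lincomb:
  assumes "x \<in> T2span S" "y \<in> T2span S"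
  shows "(\<lambda>u. c * x u + y u) \<in> T2span S"
  using assms(1)
proof (induction x rule: T2span.induct)
  case zero
  then show ?case using assms(2) by simp
next
  case (step g \<sigma> h d)
  have "(\<lambda>u. c * (d * subst g \<sigma> u + h u) + y u) = (\<lambda>u. (c * d) * subst g \<sigma> u + (c * h u + y u))"
    by (simp add: algebra_simps)
  then show ?case using step by (auto intro: T2span.step)
qed

lemma T2span_add: "x \<in> T2span S \<Longrightarrow> y \<in> T2span S \<Longrightarrow> (\<lambda>u. x u + y u) \<in> T2span S"
  using T2span_lincomb[of x S y 1] by simp

lemma T2span_subst: "g \<in> S \<Longrightarrow> graded_subst \<sigma> \<Longrightarrow> subst g \<sigma> \<in> T2span S"
  using T2span.step[of g S \<sigma> "\<lambda>_. 0" 1, OF _ _ T2span.zero] by simp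

lemma graded_subst_singletons: "graded_subst (\<lambda>v. mono [v])"
  unfolding graded_subst_def
proof (intro conjI allI)
  fix i
  show "mono [Y i] \<in> FA" "mono [Z i] \<in> FA" by (simp_all add: mono_FA)
  show "even_poly (mono [Y i])" "odd_poly (mono [Z i])"
    by (auto simp: even_poly_def odd_poly_def mono_def is_odd_var_def)
qed

lemma T2span_base: "f \<in> S \<Longrightarrow> f \<in> FA \<Longrightarrow> f \<in> T2span S"
  using T2span_subst[OF _ graded_subst_singletons, of f S] subst_singletons by (metis FA_iff)

lemma T2span_if_monomials:
  assumes "finite_supp p" "\<And>w. p w \<noteq> 0 \<Longrightarrow> mono w \<in> T2span S"
  shows "p \<in> T2span S"
proof -
  have partial_sums: "(\<lambda>u. \<Sum>w\<in>W. p w * mono w u) \<in> T2span S" if "finite W" "W \<subseteq> {w. p w \<noteq> 0}" for W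
    using that
  proof (induction W rule: finite_induct)
    case empty
    then show ?case using T2span.zero by simp
  next
    case (insert w W)
    then have "(\<lambda>u. p w * mono w u + (\<Sum>w\<in>W. p w * mono w u)) \<in> T2span S"
      by (intro T2span_lincomb assms(2)) auto
    then show ?case using insert by simp
  qed
  have "p = (\<lambda>u. \<Sum>w\<in>{w. p w \<noteq> 0}. p w * mono w u)"
  proof
    fix u
    show "p u = (\<Sum>w\<in>{w. p w \<noteq> 0}. p w * mono w u)"
      using assms(1) by (subst sum_eq_single) (auto simp: finite_supp_def mono_def)
  qed
  also have "\<dots> \<in> T2span S"
    using assms(1) by (intro partial_sums) (auto simp: finite_supp_def)
  finally show ?thesis .
qed

lemma Cgr_iff: "f \<in> Cgr t \<longleftrightarrow> f \<in> FA \<and> (\<forall>\<phi>. adm t \<phi> \<longrightarrow> evalG f \<phi> \<in> Gcenter t)"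
  by (auto simp: Cgr_def FA_def)

lemma Cgr_lincomb:
  assumes "f \<in> Cgr t" "h \<in> Cgr t"
  shows "(\<lambda>u. c * f u + h u) \<in> Cgr t"
  using assms unfolding Cgr_iff FA_iff
  by (auto simp: finite_supp_lincomb evalG_lincomb Gcenter_lincomb)

lemma Cgr_subst:
  fixes g :: "var list \<Rightarrow> 'a::field"
  assumes g: "g \<in> Cgr t" and \<sigma>: "graded_subst \<sigma>"
  shows "subst g \<sigma> \<in> Cgr t"
  unfolding Cgr_iff
proof (intro conjI allI impI)
  have \<sigma>_FA: "\<sigma> v \<in> FA" for v using graded_subst_FA[OF \<sigma>] .
  then show "subst g \<sigma> \<in> FA" using g by (simp add: Cgr_iff subst_FA)
  fix \<phi> :: "var \<Rightarrow> nat set \<Rightarrow> 'a"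
  assume "adm t \<phi>"
  then have "adm t (\<lambda>v. evalG (\<sigma> v) \<phi>)" by (rule adm_evalG_graded_subst[OF \<sigma>])
  moreover have "evalG (subst g \<sigma>) \<phi> = evalG g (\<lambda>v. evalG (\<sigma> v) \<phi>)"
    using g \<sigma>_FA by (intro evalG_subst) (auto simp: Cgr_iff FA_iff)
  ultimately show "evalG (subst g \<sigma>) \<phi> \<in> Gcenter t" using g by (simp add: Cgr_iff)
qed

lemma Idgr_subset_Cgr: "Idgr t \<subseteq> Cgr t"
  using Gcenter_zero by (auto simp: Idgr_def Cgr_iff)

lemma even_poly_Cgr:
  fixes p :: "var list \<Rightarrow> 'a::field"
  assumes "p \<in> FA" "even_poly p"
  shows "p \<in> Cgr t"
  unfolding Cgr_iff using assms evalG_Geven[of t _ p] Geven_subset_Gcenter[of t] by blast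

lemma Gcenter_if_card_ge:
  assumes "x \<in> Gcar t" "\<And>U. x U \<noteq> 0 \<Longrightarrow> t \<le> card U"
  shows "x \<in> Gcenter t"
proof (rule Gcenter_if_top_support[OF assms(1)])
  fix S assume S: "x S \<noteq> 0"
  then have "S \<subseteq> {1..t}" using assms(1) unfolding Gcar_def by blast
  moreover have "t \<le> card S" using assms(2) S by blast
  ultimately show "S = {1..t}" by (intro card_subset_eq) (auto dest: card_mono[rotated])
qed

text \<open>A product of at least \<open>t\<close> odd elements of \<open>G\<^sub>t\<close> is a multiple of \<open>e\<^sub>1 \<cdots> e\<^sub>t\<close>.\<close>
lemma Cgr_if_zdeg_ge:
  fixes p :: "var list \<Rightarrow> 'a::field"
  assumes "p \<in> FA" "\<And>w. p w \<noteq> 0 \<Longrightarrow> t \<le> zdeg w"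
  shows "p \<in> Cgr t"
  unfolding Cgr_iff
proof (intro conjI allI impI assms(1))
  fix \<phi> :: "var \<Rightarrow> nat set \<Rightarrow> 'a"
  assume adm: "adm t \<phi>"
  have e: "evalG p \<phi> = (\<lambda>U. \<Sum>w\<in>{w. p w \<noteq> 0}. p w * gprod (map \<phi> w) U)"
    by (simp add: evalG_def fun_eq_iff)
  show "evalG p \<phi> \<in> Gcenter t"
  proof (rule Gcenter_if_card_ge)
    show "evalG p \<phi> \<in> Gcar t" unfolding e by (rule Gcar_sum) (use gprod_adm[OF adm] in blast)
    fix U assume "evalG p \<phi> U \<noteq> 0"
    then have "(\<Sum>w\<in>{w. p w \<noteq> 0}. p w * gprod (map \<phi> w) U) \<noteq> 0" by (simp add: e)
    then obtain w where "p w \<noteq> 0" "p w * gprod (map \<phi> w) U \<noteq> 0"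
      using sum.not_neutral_contains_not_neutral by blast
    then have "t \<le> zdeg w" "zdeg w \<le> card U"
      using assms(2) gprod_adm_nonzero_imp_zdeg_le_card[OF adm, of w U] by auto
    then show "t \<le> card U" by linarith
  qed
qed

lemma mono_Y_Cgr: "mono [Y i] \<in> Cgr t"
proof (rule even_poly_Cgr)
  show "mono [Y i] \<in> FA" by (rule mono_FA) simp
  show "even_poly (mono [Y i])" by (simp add: even_poly_def mono_def is_odd_var_def)
qed

lemma mono_Z_Cgr:
  assumes "js \<noteq> []" "t \<le> length js"
  shows "mono (map Z js) \<in> Cgr t"
proof (rule Cgr_if_zdeg_ge)
  show "mono (map Z js) \<in> FA" using assms(1) by (intro mono_FA) simp
  fix w assume "mono (map Z js) w \<noteq> 0"
  then have "w = map Z js" by (simp add: mono_def split: if_split_asm)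
  then show "t \<le> zdeg w" using assms(2) by simp
qed

lemma T2span_subset_Cgr:
  assumes "t \<ge> 1"
  shows "T2span ({mono [Y 1], mono (map Z [1..<t+1])} \<union> Idgr t) \<subseteq>
    (Cgr t :: (var list \<Rightarrow> 'a::field_char_0) set)"
proof
  have generators: "g \<in> Cgr t"
    if "g \<in> {mono [Y 1], mono (map Z [1..<t+1])} \<union> Idgr t" for g :: "var list \<Rightarrow> 'a"
    using that assms Idgr_subset_Cgr mono_Y_Cgr mono_Z_Cgr[of "[1..<t+1]" t] by auto
  fix x :: "var list \<Rightarrow> 'a"
  assume "x \<in> T2span ({mono [Y 1], mono (map Z [1..<t+1])} \<union> Idgr t)"
  then show "x \<in> Cgr t"
  proof (induction x rule: T2span.induct)
    case zero
    then show ?case by (simp add: Cgr_iff FA_zero Gcenter_zero)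
  next
    case (step g \<sigma> h c)
    have "subst g \<sigma> \<in> Cgr t" using step.hyps(1,2) by (intro Cgr_subst generators)
    then show ?case using step.IH by (rule Cgr_lincomb)
  qed
qed

section \<open>Decomposing a central polynomial\<close>

definition poly_restrict :: "(var list \<Rightarrow> bool) \<Rightarrow> (var list \<Rightarrow> 'a::field) \<Rightarrow> var list \<Rightarrow> 'a" where
  "poly_restrict P f = (\<lambda>w. if P w then f w else 0)"

lemma poly_restrict_nonzeroD: "poly_restrict P f w \<noteq> 0 \<Longrightarrow> P w \<and> f w \<noteq> 0"
  by (simp add: poly_restrict_def split: if_split_asm)

lemma FA_poly_restrict: "f \<in> FA \<Longrightarrow> poly_restrict P f \<in> FA"
  unfolding poly_restrict_def by (simp add: FA_iff finite_supp_restrict)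

lemma poly_restrict_complement:
  "poly_restrict (\<lambda>w. \<not> P w) f = (\<lambda>u. (-1) * poly_restrict P f u + f u)"
  by (simp add: poly_restrict_def fun_eq_iff)

lemma Cgr_poly_restrict_complement:
  assumes "f \<in> Cgr t" "poly_restrict P f \<in> Cgr t"
  shows "poly_restrict (\<lambda>w. \<not> P w) f \<in> Cgr t"
  unfolding poly_restrict_complement using assms(2,1) by (rule Cgr_lincomb)

lemma even_poly_in_T2span:
  assumes "mono [Y i] \<in> S" "p \<in> FA" "even_poly p"
  shows "p \<in> T2span S"
proof -
  define \<sigma> where "\<sigma> = (\<lambda>v. if v = Y i then p else (\<lambda>_. 0))"
  have "graded_subst \<sigma>"
    using assms(2,3) FA_zero unfolding graded_subst_def \<sigma>_def by (auto simp: even_poly_def odd_poly_def)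
  moreover have "subst (mono [Y i]) \<sigma> = p"
    by (simp add: subst_mono \<sigma>_def pmul_mono_Nil_right)
  ultimately show ?thesis using T2span_subst[OF assms(1)] by metis
qed

lemma Gcenter_Godd_eq_0:
  fixes c :: "nat set \<Rightarrow> 'a::field_char_0"
  assumes "even t" "c \<in> Gcenter t" "c \<in> Godd t"
  shows "c = (\<lambda>_. 0)"
proof
  fix U show "c U = 0"
  proof (rule ccontr)
    assume "c U \<noteq> 0"
    then have "U \<subseteq> {1..t}" "odd (card U)" using assms(3) unfolding Godd_def Gcar_def by auto
    moreover from this have "U \<noteq> {1..t}" using assms(1) by auto
    ultimately have "c U = 0" using Gcenter_odd_coeff_eq_0[OF assms(2)] by blast
    with \<open>c U \<noteq> 0\<close> show False by contradiction
  qed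
qed

lemma odd_poly_Cgr_in_Idgr:
  fixes p :: "var list \<Rightarrow> 'a::field_char_0"
  assumes "even t" "p \<in> Cgr t" "odd_poly p"
  shows "p \<in> Idgr t"
  unfolding Idgr_def
proof (intro CollectI conjI allI impI)
  show "p \<in> FA" using assms(2) by (simp add: Cgr_iff)
  fix \<phi> :: "var \<Rightarrow> nat set \<Rightarrow> 'a"
  assume "adm t \<phi>"
  with assms show "evalG p \<phi> = (\<lambda>_. 0)"
    by (intro Gcenter_Godd_eq_0 evalG_Godd) (auto simp: Cgr_iff)
qed

lemma low_odd_Cgr_in_Idgr:
  fixes p :: "var list \<Rightarrow> 'a::field_char_0"
  assumes "p \<in> Cgr t" "\<And>w. p w \<noteq> 0 \<Longrightarrow> odd (zdeg w) \<and> zdeg w < t"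
  shows "p \<in> Idgr t"
  using assms central_low_odd_evalG_eq_0[of p t] by (auto simp: Idgr_def Cgr_iff FA_iff)

fun cut_Z :: "var list \<Rightarrow> var list \<times> var list" where
  "cut_Z [] = ([], [])"
| "cut_Z (Y i # w) = (Y i # fst (cut_Z w), snd (cut_Z w))"
| "cut_Z (Z j # w) = ([Z j], w)"

lemma cut_Z_append: "fst (cut_Z w) @ snd (cut_Z w) = w"
  by (induction w rule: cut_Z.induct) auto

lemma zdeg_cut_Z: "zdeg w \<noteq> 0 \<Longrightarrow> zdeg (fst (cut_Z w)) = 1 \<and> zdeg (snd (cut_Z w)) = zdeg w - 1"
  by (induction w rule: cut_Z.induct) auto

fun Z_pieces :: "nat \<Rightarrow> var list \<Rightarrow> var list list" where
  "Z_pieces 0 w = [w]"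
| "Z_pieces (Suc n) w = fst (cut_Z w) # Z_pieces n (snd (cut_Z w))"

lemma concat_Z_pieces: "concat (Z_pieces n w) = w"
  by (induction n arbitrary: w) (auto simp: cut_Z_append)

lemma length_Z_pieces: "length (Z_pieces n w) = Suc n"
  by (induction n arbitrary: w) auto

lemma zdeg_Z_pieces: "n < zdeg w \<Longrightarrow> p \<in> set (Z_pieces n w) \<Longrightarrow> zdeg p = 1 \<or> zdeg p = zdeg w - n"
proof (induction n arbitrary: w)
  case (Suc n)
  then have "zdeg (fst (cut_Z w)) = 1" "zdeg (snd (cut_Z w)) = zdeg w - 1"
    using zdeg_cut_Z by auto
  with Suc.IH[of "snd (cut_Z w)"] Suc.prems show ?case by auto
qed simp

definition pieces_subst :: "nat \<Rightarrow> var list \<Rightarrow> var \<Rightarrow> var list \<Rightarrow> 'a::field" where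
  "pieces_subst t w = (\<lambda>v. case v of
      Y i \<Rightarrow> (\<lambda>_. 0)
    | Z i \<Rightarrow> if 1 \<le> i \<and> i \<le> t then mono (Z_pieces (t - 1) w ! (i - 1)) else (\<lambda>_. 0))"

text \<open>For odd \<open>t\<close> every piece has an odd number of odd variables: the first \<open>t - 1\<close>
  pieces one each, the last one the remaining (odd) number.\<close>
lemma graded_pieces_subst:
  assumes "odd t" "odd (zdeg w)" "t \<le> zdeg w"
  shows "graded_subst (pieces_subst t w :: var \<Rightarrow> var list \<Rightarrow> 'a::field)"
  unfolding graded_subst_def
proof (rule conjI; rule allI)
  fix i
  show "(pieces_subst t w (Y i) :: var list \<Rightarrow> 'a) \<in> FA \<and>
      even_poly (pieces_subst t w (Y i) :: var list \<Rightarrow> 'a)"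
    by (simp add: pieces_subst_def FA_zero even_poly_def)
next
  fix i
  show "(pieces_subst t w (Z i) :: var list \<Rightarrow> 'a) \<in> FA \<and>
      odd_poly (pieces_subst t w (Z i) :: var list \<Rightarrow> 'a)"
  proof (cases "1 \<le> i \<and> i \<le> t")
    case True
    let ?p = "Z_pieces (t - 1) w ! (i - 1)"
    have "?p \<in> set (Z_pieces (t - 1) w)"
      using True by (intro nth_mem) (auto simp: length_Z_pieces)
    then have "zdeg ?p = 1 \<or> zdeg ?p = zdeg w - (t - 1)"
      using assms odd_pos[OF assms(1)] by (intro zdeg_Z_pieces) auto
    then have "odd (zdeg ?p)" using assms by auto
    then have "?p \<noteq> []" "odd_poly (mono ?p :: var list \<Rightarrow> 'a)"
      by (auto simp: odd_poly_def mono_def zdeg_def)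
    then show ?thesis using True by (simp add: pieces_subst_def mono_FA)
  qed (auto simp: pieces_subst_def FA_zero odd_poly_def)
qed

lemma subst_pieces_subst:
  assumes "odd t"
  shows "subst (mono (map Z [1..<t+1])) (pieces_subst t w) = (mono w :: var list \<Rightarrow> 'a::field)"
proof -
  have "map (pieces_subst t w :: var \<Rightarrow> var list \<Rightarrow> 'a) (map Z [1..<t+1]) = map mono (Z_pieces (t - 1) w)"
    using assms by (intro nth_equalityI) (auto simp: pieces_subst_def length_Z_pieces simp del: upt_Suc)
  then show ?thesis by (simp add: subst_mono pprod_map_mono concat_Z_pieces)
qed

lemma high_odd_poly_in_T2span:
  assumes "odd t" "mono (map Z [1..<t+1]) \<in> S" "finite_supp p"
    and "\<And>w. p w \<noteq> 0 \<Longrightarrow> odd (zdeg w) \<and> t \<le> zdeg w"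
  shows "p \<in> T2span S"
proof (rule T2span_if_monomials[OF assms(3)])
  fix w assume "p w \<noteq> 0"
  then have "graded_subst (pieces_subst t w)" using assms(1,4) by (intro graded_pieces_subst) auto
  then show "mono w \<in> T2span S"
    using T2span_subst[OF assms(2)] subst_pieces_subst[OF assms(1)] by metis
qed

lemma odd_Cgr_in_T2span:
  fixes p :: "var list \<Rightarrow> 'a::field_char_0" and t :: nat
  defines "S \<equiv> {mono [Y 1], mono (map Z [1..<t+1])} \<union> Idgr t"
  assumes p: "p \<in> Cgr t" "\<And>w. p w \<noteq> 0 \<Longrightarrow> odd (zdeg w)"
  shows "p \<in> T2span S"
proof (cases "even t")
  case True
  then have "p \<in> Idgr t" using p by (intro odd_poly_Cgr_in_Idgr) (auto simp: odd_poly_def zdeg_def)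
  then show ?thesis using p(1) by (intro T2span_base) (auto simp: S_def Cgr_iff)
next
  case False
  define hi where "hi = poly_restrict (\<lambda>w. t \<le> zdeg w) p"
  define lo where "lo = poly_restrict (\<lambda>w. \<not> t \<le> zdeg w) p"
  have p_FA: "p \<in> FA" using p(1) by (simp add: Cgr_iff)
  have hi_Cgr: "hi \<in> Cgr t"
    unfolding hi_def by (rule Cgr_if_zdeg_ge) (auto simp: p_FA FA_poly_restrict dest: poly_restrict_nonzeroD)
  have "hi \<in> FA" unfolding hi_def using p_FA by (rule FA_poly_restrict)
  moreover have "odd (zdeg w) \<and> t \<le> zdeg w" if "hi w \<noteq> 0" for w
    using that p(2) unfolding hi_def by (auto dest: poly_restrict_nonzeroD)
  ultimately have "hi \<in> T2span S"
    using False by (intro high_odd_poly_in_T2span) (auto simp: S_def FA_iff)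
  moreover have "lo \<in> T2span S"
  proof -
    have "lo \<in> Idgr t"
      unfolding lo_def using p hi_Cgr unfolding hi_def
      by (intro low_odd_Cgr_in_Idgr Cgr_poly_restrict_complement) (auto dest: poly_restrict_nonzeroD)
    then show ?thesis by (intro T2span_base) (auto simp: S_def Idgr_def)
  qed
  ultimately have "(\<lambda>u. hi u + lo u) \<in> T2span S" by (rule T2span_add)
  moreover have "(\<lambda>u. hi u + lo u) = p" by (simp add: hi_def lo_def poly_restrict_def fun_eq_iff)
  ultimately show ?thesis by simp
qed

lemma Cgr_subset_T2span:
  "(Cgr t :: (var list \<Rightarrow> 'a::field_char_0) set) \<subseteq> T2span ({mono [Y 1], mono (map Z [1..<t+1])} \<union> Idgr t)"
proof
  let ?S = "{mono [Y 1], mono (map Z [1..<t+1])} \<union> (Idgr t :: (var list \<Rightarrow> 'a) set)"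
  fix f :: "var list \<Rightarrow> 'a" assume f: "f \<in> Cgr t"
  define f_even where "f_even = poly_restrict (\<lambda>w. even (zdeg w)) f"
  define f_odd where "f_odd = poly_restrict (\<lambda>w. \<not> even (zdeg w)) f"
  have even: "f_even \<in> FA" "even_poly f_even"
    using f by (simp_all add: f_even_def Cgr_iff FA_poly_restrict)
      (auto simp: even_poly_def zdeg_def poly_restrict_def)
  then have "f_even \<in> T2span ?S" by (intro even_poly_in_T2span) auto
  moreover have "f_odd \<in> T2span ?S"
    unfolding f_odd_def using f even even_poly_Cgr unfolding f_even_def
    by (intro odd_Cgr_in_T2span Cgr_poly_restrict_complement) (auto dest: poly_restrict_nonzeroD)
  ultimately have "(\<lambda>u. f_even u + f_odd u) \<in> T2span ?S" by (rule T2span_add)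
  moreover have "(\<lambda>u. f_even u + f_odd u) = f"
    by (simp add: f_even_def f_odd_def poly_restrict_def fun_eq_iff)
  ultimately show "f \<in> T2span ?S" by simp
qed

theorem theorem5p2:
  fixes t :: nat
  assumes "t \<ge> 2"
  shows "(Cgr t :: (var list \<Rightarrow> 'a::field_char_0) set) =
         T2span ({mono [Y 1], mono (map Z [1..<t+1])} \<union> Idgr t)"
proof (rule equalityI)
  show "(Cgr t :: (var list \<Rightarrow> 'a) set) \<subseteq> T2span ({mono [Y 1], mono (map Z [1..<t+1])} \<union> Idgr t)"
    by (rule Cgr_subset_T2span)
  show "T2span ({mono [Y 1], mono (map Z [1..<t+1])} \<union> Idgr t) \<subseteq> (Cgr t :: (var list \<Rightarrow> 'a) set)"
    by (rule T2span_subset_Cgr) (use assms in simp)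
qed

end
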